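(* Let $\mathcal{A}$ be a finite-dimensional $\mathbb{C}^*$-weak Hopf algebra, $\rho:\mathcal{A}\to M_d(\mathbb{C})$ a $*$-representation and $(v_{ij})_{1\le i,j\le d}$ a corepresentation with $S(v_{ij})=v_{ji}^*$ (so $d_\rho=d_v=d$). Let $W,P,Q$ be the operators on $\mathbb{C}^d\otimes\mathbb{C}^d$ given by $\langle i,a|W|b,j\rangle=\rho_{ab}(v_{ij})$, $\langle i,a|P|j,b\rangle=\sum\epsilon(1_{(1)}v_{ij})\rho_{ab}(1_{(2)})$, $\langle a,i|Q|b,j\rangle=\sum\rho_{ab}(1_{(1)})\epsilon(v_{ij}1_{(2)})$, and let $U$ be a unitary with $W=PU=UQ$. Let $L\ge2$ and consider a periodic chain of $2L$ qudits $\mathbb{C}^d$ at sites $\tfrac12,1,\tfrac32,\dots,L$ (site labels taken modulo $L$). For a two-site operator $X$ and $j\in\tfrac12\mathbb{Z}$, let $X_{j,j+1/2}$ denote $X$ acting on sites $j,j+\tfrac12$ (in this order). Define $$\hat{\mathbf P}=\prod_{j=1}^LP_{j,j+1/2}\prod_{j=1}^LQ_{j-1/2,j},\quad \hat{\mathbf P}_{1/2}=\prod_{j=1}^LQ_{j,j+1/2}\prod_{j=1}^LP_{j-1/2,j},\quad \hat{\mathbf U}_o=\prod_{j=1}^LU_{j-1/2,j},\quad \hat{\mathbf U}_e=\prod_{j=1}^LU_{j,j+1/2}.$$ Then $\hat{\mathbf P}_{1/2}\hat{\mathbf U}_o\hat{\mathbf P}=\hat{\mathbf U}_o\hat{\mathbf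 P}$ and $\hat{\mathbf P}\hat{\mathbf U}_e\hat{\mathbf P}_{1/2}=\hat{\mathbf U}_e\hat{\mathbf P}_{1/2}$. Consequently $\hat{\mathbf U}_o$ maps the range of $\hat{\mathbf P}$ onto the range of $\hat{\mathbf P}_{1/2}$, $\hat{\mathbf U}_e$ maps the range of $\hat{\mathbf P}_{1/2}$ onto the range of $\hat{\mathbf P}$, and $\hat{\mathbf U}=\hat{\mathbf U}_e\hat{\mathbf U}_o$ leaves the range of $\hat{\mathbf P}$ invariant.
   Context: A weak bialgebra is a finite-dimensional unital associative algebra and coassociative counital coalgebra with $\Delta(xy)=\Delta(x)\Delta(y)$, $\Delta^{(2)}(1)=(1\otimes\Delta(1))(\Delta(1)\otimes1)=(\Delta(1)\otimes1)(1\otimes\Delta(1))$, $\epsilon(xyz)=\sum\epsilon(xy_{(1)})\epsilon(y_{(2)}z)=\sum\epsilon(xy_{(2)})\epsilon(y_{(1)}z)$. With $\epsilon_s(x)=\sum1_{(1)}\epsilon(x1_{(2)})$, $\epsilon_t(x)=\sum\epsilon(1_{(1)}x)1_{(2)}$, a weak Hopf algebra has a linear $S$ with $\sum S(x_{(1)})x_{(2)}=\epsilon_s(x)$, $\sum x_{(1)}S(x_{(2)})=\epsilon_t(x)$, $\sum S(x_{(1)})x_{(2)}S(x_{(3)})=S(x)$. A $\mathbb{C}^*$-weak Hopf algebra has an antilinear involution $*$ with $(xy)^*=y^*x^*$, $\Delta(x^* )=\Delta(x)^*$, and a faithful $*$-representation. A $*$-representation satisfies $\rho(x^* )=\rho(x)^\dagger$;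 a corepresentation satisfies $\Delta(v_{ij})=\sum_kv_{ik}\otimes v_{kj}$, $\epsilon(v_{ij})=\delta_{ij}$. For such data $P,Q$ are orthogonal projections with $WW^\dagger=P$, $W^\dagger W=Q$, so a unitary $U$ with $W=PU=UQ$ exists; the factors in each product defining $\hat{\mathbf P}$, $\hat{\mathbf P}_{1/2}$ mutually commute. *)

theory Defs
  imports "HOL-Analysis.Analysis"
begin

section \<open>Coordinates: a finite-dimensional algebra A is complex ^ 'b (basis indexed by 'b)\<close>

definition ebas :: "'b::finite \<Rightarrow> complex ^ 'b" where
  "ebas b = axis b 1"

definition clin_map :: "(complex ^ 'a \<Rightarrow> complex ^ 'c) \<Rightarrow> bool" where
  "clin_map f \<longleftrightarrow> (\<forall>x y. f (x + y) = f x + f y) \<and> (\<forall>c x. f (c *s x) = c *s f x)"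

definition clin_fun :: "(complex ^ 'a \<Rightarrow> complex) \<Rightarrow> bool" where
  "clin_fun f \<longleftrightarrow> (\<forall>x y. f (x + y) = f x + f y) \<and> (\<forall>c x. f (c *s x) = c * f x)"

definition tens :: "complex ^ 'a \<Rightarrow> complex ^ 'c \<Rightarrow> complex ^ ('a \<times> 'c)" where
  "tens x y = vec_lambda (\<lambda>(i, j). x $ i * y $ j)"

text \<open>(Delta tensor id) and (id tensor Delta) applied to an element of A tensor A\<close>
definition cop_left :: "(complex ^ 'b \<Rightarrow> complex ^ ('b \<times> 'b)) \<Rightarrow> complex ^ ('b::finite \<times> 'b)
    \<Rightarrow> complex ^ ('b \<times> 'b \<times> 'b)" where
  "cop_left cop X = vec_lambda (\<lambda>(p, q, r). \<Sum>i\<in>UNIV. X $ (i, r) * cop (ebas i) $ (p, q))"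

definition cop_right :: "(complex ^ 'b \<Rightarrow> complex ^ ('b \<times> 'b)) \<Rightarrow> complex ^ ('b::finite \<times> 'b)
    \<Rightarrow> complex ^ ('b \<times> 'b \<times> 'b)" where
  "cop_right cop X = vec_lambda (\<lambda>(p, q, r). \<Sum>j\<in>UNIV. X $ (p, j) * cop (ebas j) $ (q, r))"

definition mul2 :: "(complex ^ 'b \<Rightarrow> complex ^ 'b \<Rightarrow> complex ^ 'b) \<Rightarrow>
    complex ^ ('b::finite \<times> 'b) \<Rightarrow> complex ^ ('b \<times> 'b) \<Rightarrow> complex ^ ('b \<times> 'b)" where
  "mul2 mul X Y = vec_lambda (\<lambda>(p, q). \<Sum>i\<in>UNIV. \<Sum>j\<in>UNIV. \<Sum>k\<in>UNIV. \<Sum>l\<in>UNIV.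
      X $ (i, j) * Y $ (k, l) * mul (ebas i) (ebas k) $ p * mul (ebas j) (ebas l) $ q)"

definition mul3 :: "(complex ^ 'b \<Rightarrow> complex ^ 'b \<Rightarrow> complex ^ 'b) \<Rightarrow>
    complex ^ ('b::finite \<times> 'b \<times> 'b) \<Rightarrow> complex ^ ('b \<times> 'b \<times> 'b) \<Rightarrow> complex ^ ('b \<times> 'b \<times> 'b)" where
  "mul3 mul X Y = vec_lambda (\<lambda>(p, q, r). \<Sum>i\<in>UNIV. \<Sum>j\<in>UNIV. \<Sum>k\<in>UNIV.
      \<Sum>i'\<in>UNIV. \<Sum>j'\<in>UNIV. \<Sum>k'\<in>UNIV.
      X $ (i, j, k) * Y $ (i', j', k') * mul (ebas i) (ebas i') $ p
        * mul (ebas j) (ebas j') $ q * mul (ebas k) (ebas k') $ r)"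

definition star2 :: "(complex ^ 'b \<Rightarrow> complex ^ 'b) \<Rightarrow> complex ^ ('b::finite \<times> 'b) \<Rightarrow> complex ^ ('b \<times> 'b)" where
  "star2 st X = vec_lambda (\<lambda>(p, q). \<Sum>i\<in>UNIV. \<Sum>j\<in>UNIV.
      cnj (X $ (i, j)) * st (ebas i) $ p * st (ebas j) $ q)"

definition weak_bialgebra ::
  "(complex ^ 'b \<Rightarrow> complex ^ 'b \<Rightarrow> complex ^ 'b) \<Rightarrow> complex ^ 'b \<Rightarrow>
   (complex ^ 'b \<Rightarrow> complex ^ ('b \<times> 'b)) \<Rightarrow> (complex ^ 'b::finite \<Rightarrow> complex) \<Rightarrow> bool" where
  "weak_bialgebra mul one cop cou \<longleftrightarrow>
     \<comment> \<open>unital associative algebra\<close>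
     (\<forall>x. clin_map (mul x)) \<and> (\<forall>y. clin_map (\<lambda>x. mul x y)) \<and>
     (\<forall>x y z. mul (mul x y) z = mul x (mul y z)) \<and>
     (\<forall>x. mul one x = x \<and> mul x one = x) \<and>
     \<comment> \<open>coassociative counital coalgebra\<close>
     clin_map cop \<and> clin_fun cou \<and>
     (\<forall>x. cop_left cop (cop x) = cop_right cop (cop x)) \<and>
     (\<forall>x k. (\<Sum>i\<in>UNIV. cop x $ (i, k) * cou (ebas i)) = x $ k) \<and>
     (\<forall>x k. (\<Sum>j\<in>UNIV. cop x $ (k, j) * cou (ebas j)) = x $ k) \<and>
     \<comment> \<open>weak bialgebra axioms\<close>
     (\<forall>x y. cop (mul x y) = mul2 mul (cop x) (cop y)) \<and>
     (let one1 = vec_lambda (\<lambda>(p, q, r). one $ p * cop one $ (q, r));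
          one2 = vec_lambda (\<lambda>(p, q, r). cop one $ (p, q) * one $ r)
      in cop_right cop (cop one) = mul3 mul one1 one2 \<and>
         cop_right cop (cop one) = mul3 mul one2 one1) \<and>
     (\<forall>x y z.
        cou (mul (mul x y) z) =
          (\<Sum>i\<in>UNIV. \<Sum>j\<in>UNIV. cop y $ (i, j) * cou (mul x (ebas i)) * cou (mul (ebas j) z)) \<and>
        cou (mul (mul x y) z) =
          (\<Sum>i\<in>UNIV. \<Sum>j\<in>UNIV. cop y $ (i, j) * cou (mul x (ebas j)) * cou (mul (ebas i) z)))"

definition eps_s :: "(complex ^ 'b \<Rightarrow> complex ^ 'b \<Rightarrow> complex ^ 'b) \<Rightarrow> complex ^ 'b \<Rightarrow>
   (complex ^ 'b \<Rightarrow> complex ^ ('b \<times> 'b)) \<Rightarrow> (complex ^ 'b::finite \<Rightarrow> complex) \<Rightarrow> complex ^ 'b \<Rightarrow> complex ^ 'b" where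
  "eps_s mul one cop cou x =
     (\<Sum>i\<in>UNIV. \<Sum>j\<in>UNIV. (cop one $ (i, j) * cou (mul x (ebas j))) *s ebas i)"

definition eps_t :: "(complex ^ 'b \<Rightarrow> complex ^ 'b \<Rightarrow> complex ^ 'b) \<Rightarrow> complex ^ 'b \<Rightarrow>
   (complex ^ 'b \<Rightarrow> complex ^ ('b \<times> 'b)) \<Rightarrow> (complex ^ 'b::finite \<Rightarrow> complex) \<Rightarrow> complex ^ 'b \<Rightarrow> complex ^ 'b" where
  "eps_t mul one cop cou x =
     (\<Sum>i\<in>UNIV. \<Sum>j\<in>UNIV. (cop one $ (i, j) * cou (mul (ebas i) x)) *s ebas j)"

definition weak_hopf ::
  "(complex ^ 'b \<Rightarrow> complex ^ 'b \<Rightarrow> complex ^ 'b) \<Rightarrow> complex ^ 'b \<Rightarrow>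
   (complex ^ 'b \<Rightarrow> complex ^ ('b \<times> 'b)) \<Rightarrow> (complex ^ 'b::finite \<Rightarrow> complex) \<Rightarrow>
   (complex ^ 'b \<Rightarrow> complex ^ 'b) \<Rightarrow> bool" where
  "weak_hopf mul one cop cou S \<longleftrightarrow>
     weak_bialgebra mul one cop cou \<and> clin_map S \<and>
     (\<forall>x. (\<Sum>i\<in>UNIV. \<Sum>j\<in>UNIV. cop x $ (i, j) *s mul (S (ebas i)) (ebas j)) = eps_s mul one cop cou x) \<and>
     (\<forall>x. (\<Sum>i\<in>UNIV. \<Sum>j\<in>UNIV. cop x $ (i, j) *s mul (ebas i) (S (ebas j))) = eps_t mul one cop cou x) \<and>
     (\<forall>x. (\<Sum>i\<in>UNIV. \<Sum>j\<in>UNIV. \<Sum>k\<in>UNIV.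
            cop_right cop (cop x) $ (i, j, k) *s mul (mul (S (ebas i)) (ebas j)) (S (ebas k))) = S x)"

definition star_rep_nat ::
  "(complex ^ 'b \<Rightarrow> complex ^ 'b \<Rightarrow> complex ^ 'b) \<Rightarrow> complex ^ 'b \<Rightarrow> (complex ^ 'b \<Rightarrow> complex ^ 'b)
   \<Rightarrow> nat \<Rightarrow> (complex ^ 'b \<Rightarrow> nat \<Rightarrow> nat \<Rightarrow> complex) \<Rightarrow> bool" where
  "star_rep_nat mul one st n \<pi> \<longleftrightarrow>
     (\<forall>x y i j. i < n \<longrightarrow> j < n \<longrightarrow> \<pi> (x + y) i j = \<pi> x i j + \<pi> y i j) \<and>
     (\<forall>c x i j. i < n \<longrightarrow> j < n \<longrightarrow> \<pi> (c *s x) i j = c * \<pi> x i j) \<and>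
     (\<forall>x y i j. i < n \<longrightarrow> j < n \<longrightarrow> \<pi> (mul x y) i j = (\<Sum>k<n. \<pi> x i k * \<pi> y k j)) \<and>
     (\<forall>i j. i < n \<longrightarrow> j < n \<longrightarrow> \<pi> one i j = (if i = j then 1 else 0)) \<and>
     (\<forall>x i j. i < n \<longrightarrow> j < n \<longrightarrow> \<pi> (st x) i j = cnj (\<pi> x j i))"

definition c_star_weak_hopf ::
  "(complex ^ 'b \<Rightarrow> complex ^ 'b \<Rightarrow> complex ^ 'b) \<Rightarrow> complex ^ 'b \<Rightarrow>
   (complex ^ 'b \<Rightarrow> complex ^ ('b \<times> 'b)) \<Rightarrow> (complex ^ 'b::finite \<Rightarrow> complex) \<Rightarrow>
   (complex ^ 'b \<Rightarrow> complex ^ 'b) \<Rightarrow> (complex ^ 'b \<Rightarrow> complex ^ 'b) \<Rightarrow> bool" where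
  "c_star_weak_hopf mul one cop cou S st \<longleftrightarrow>
     weak_hopf mul one cop cou S \<and>
     (\<forall>x y. st (x + y) = st x + st y) \<and>
     (\<forall>c x. st (c *s x) = cnj c *s st x) \<and>
     (\<forall>x. st (st x) = x) \<and>
     (\<forall>x y. st (mul x y) = mul (st y) (st x)) \<and>
     (\<forall>x. cop (st x) = star2 st (cop x)) \<and>
     (\<exists>n \<pi>. star_rep_nat mul one st n \<pi> \<and>
        (\<forall>x y. (\<forall>i j. i < n \<longrightarrow> j < n \<longrightarrow> \<pi> x i j = \<pi> y i j) \<longrightarrow> x = y))"

definition adj :: "complex ^ 'n ^ 'm \<Rightarrow> complex ^ 'm ^ 'n" where
  "adj M = (\<chi> i j. cnj (M $ j $ i))"

definition unitary_mat :: "complex ^ 'n::finite ^ 'n \<Rightarrow> bool" where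
  "unitary_mat U \<longleftrightarrow> U ** adj U = mat 1 \<and> adj U ** U = mat 1"

text \<open>*-representation into M_d(C), d = CARD('d)\<close>
definition star_rep ::
  "(complex ^ 'b \<Rightarrow> complex ^ 'b \<Rightarrow> complex ^ 'b) \<Rightarrow> complex ^ 'b \<Rightarrow> (complex ^ 'b \<Rightarrow> complex ^ 'b)
   \<Rightarrow> (complex ^ 'b \<Rightarrow> complex ^ 'd ^ 'd) \<Rightarrow> bool" where
  "star_rep mul one st \<rho> \<longleftrightarrow>
     (\<forall>x y. \<rho> (x + y) = \<rho> x + \<rho> y) \<and> (\<forall>c x a b. \<rho> (c *s x) $ a $ b = c * \<rho> x $ a $ b) \<and>
     (\<forall>x y. \<rho> (mul x y) = \<rho> x ** \<rho> y) \<and> \<rho> one = mat 1 \<and>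
     (\<forall>x. \<rho> (st x) = adj (\<rho> x))"

definition corep ::
  "(complex ^ 'b \<Rightarrow> complex ^ ('b \<times> 'b)) \<Rightarrow> (complex ^ 'b \<Rightarrow> complex) \<Rightarrow> ('d::finite \<Rightarrow> 'd \<Rightarrow> complex ^ 'b) \<Rightarrow> bool" where
  "corep cop cou v \<longleftrightarrow>
     (\<forall>i j. cop (v i j) = (\<Sum>k\<in>UNIV. tens (v i k) (v k j))) \<and>
     (\<forall>i j. cou (v i j) = (if i = j then 1 else 0))"

section \<open>Periodic chain of 2L qudits. Site label j (j in 1/2 Z mod L) is the element 2j of 'L bit0 (= Z/2L).\<close>

definition emb2 :: "'s::finite \<Rightarrow> 's \<Rightarrow> complex ^ ('d::finite \<times> 'd) ^ ('d \<times> 'd) \<Rightarrow> complex ^ ('d ^ 's) ^ ('d ^ 's)" where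
  "emb2 k k' X = (\<chi> \<sigma> \<tau>. if (\<forall>m. m \<noteq> k \<and> m \<noteq> k' \<longrightarrow> \<sigma> $ m = \<tau> $ m)
                        then X $ (\<sigma> $ k, \<sigma> $ k') $ (\<tau> $ k, \<tau> $ k') else 0)"

definition mat_prod_list :: "(complex ^ 'n::finite ^ 'n) list \<Rightarrow> complex ^ 'n ^ 'n" where
  "mat_prod_list Ms = foldr (**) Ms (mat 1)"

text \<open>site with doubled label m, i.e. the physical site m/2\<close>
definition site :: "nat \<Rightarrow> 'L::finite bit0" where
  "site m = of_nat m"

definition prod_int_half :: "complex ^ ('d::finite \<times> 'd) ^ ('d \<times> 'd) \<Rightarrow> complex ^ ('d ^ 'L::finite bit0) ^ ('d ^ 'L bit0)" where
  "prod_int_half X = mat_prod_list (map (\<lambda>j. emb2 (site (2 * j) :: 'L bit0) (site (2 * j + 1)) X) [1..<CARD('L) + 1])"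

definition prod_half_int :: "complex ^ ('d::finite \<times> 'd) ^ ('d \<times> 'd) \<Rightarrow> complex ^ ('d ^ 'L::finite bit0) ^ ('d ^ 'L bit0)" where
  "prod_half_int X = mat_prod_list (map (\<lambda>j. emb2 (site (2 * j - 1) :: 'L bit0) (site (2 * j)) X) [1..<CARD('L) + 1])"

end

theory Submission
  imports Defs
begin

(* P and Q are the images under \<rho> of the counital maps: P(ia,jb) = \<rho>(\<epsilon>_t(v_ij))_ab and
   Q(ai,bj) = \<rho>(\<epsilon>_s(v_ij))_ab.  The antipode axiom x_(1) S(x_(2)) = \<epsilon>_t(x) together with
   S(v_ij) = v_ji^* gives W W^* = P; as W = P U with U unitary, P = P P^* is a projection and P W = W.

   Three local identities hold already in the weak bialgebra.  \<epsilon>_t(A) and \<epsilon>_s(A) commute, since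
   both products are read off from the two factorisations of \<Delta>\<^sup>2(1); hence P_01 Q_12 = Q_12 P_01.
   The two forms of the weak counit axiom give \<epsilon>_s(x_(2)) \<otimes> \<epsilon>_t(x_(1)) = \<epsilon>_s(x_(1)) \<otimes> \<epsilon>_t(x_(2)); hence
   Q_01 P_12 = P_12 Q_01.  From (id \<otimes> \<epsilon>_t)\<Delta>(x) = \<Delta>(1)(x \<otimes> 1), (\<epsilon>_s \<otimes> id)\<Delta>(y) = (1 \<otimes> y)\<Delta>(1) and
   \<Delta>(1)\<Delta>(1) = \<Delta>(1) one gets \<epsilon>_s(y_(1)) x_(1) \<otimes> y_(2) \<epsilon>_t(x_(2)) = x_(1) \<otimes> y \<epsilon>_t(x_(2)); hence
   Q_12 W_01 W_23 P_12 = W_01 W_23 P_12.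

   On the chain, operators on disjoint pairs of sites commute.  So U_o P_hat = U_o Q_o P_e = W_o P_e, the
   P-factors of P_half are absorbed by W_o because P W = W, and each Q-factor of P_half meets only the
   two W-factors and the P-factor overlapping its bond, which it absorbs by the third local identity.
   The second identity is the same argument shifted by half a site.  Since U_o and U_e are invertible,
   the inclusions of ranges they induce preserve dimension, hence are equalities. *)

section \<open>Coordinates\<close>

lemma ebas_nth [simp]: "ebas b $ p = (if p = b then 1 else 0)"
  by (simp add: ebas_def axis_def)

lemma vec_eq_sum_ebas: "x = (\<Sum>p\<in>UNIV. x $ p *s ebas p)"
  by (simp add: vec_eq_iff if_distrib cong: if_cong)

lemma clin_fun_zero: "clin_fun f \<Longrightarrow> f 0 = 0"
  unfolding clin_fun_def by (metis mult_zero_left vector_smult_lzero)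

lemma clin_fun_sum: "clin_fun f \<Longrightarrow> f (\<Sum>p\<in>A. g p) = (\<Sum>p\<in>A. f (g p))"
  by (induction A rule: infinite_finite_induct) (auto simp: clin_fun_zero clin_fun_def)

lemma clin_fun_expand: "clin_fun f \<Longrightarrow> f x = (\<Sum>p\<in>UNIV. x $ p * f (ebas p))"
  by (subst vec_eq_sum_ebas) (simp add: clin_fun_sum clin_fun_def)

lemma clin_fun_component: "clin_fun (\<lambda>x. x $ p)"
  by (simp add: clin_fun_def)

lemma clin_fun_comp: "clin_fun f \<Longrightarrow> clin_map g \<Longrightarrow> clin_fun (\<lambda>x. f (g x))"
  by (simp add: clin_fun_def clin_map_def)

lemma clin_map_comp: "clin_map f \<Longrightarrow> clin_map g \<Longrightarrow> clin_map (\<lambda>x. f (g x))"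
  by (simp add: clin_map_def)

lemma clin_map_expand: "clin_map g \<Longrightarrow> g x = (\<Sum>p\<in>UNIV. x $ p *s g (ebas p))"
  by (simp add: vec_eq_iff clin_fun_expand[OF clin_fun_comp[OF clin_fun_component]])

lemma sum_if_zero: "(\<Sum>j\<in>A. if c then f j else 0) = (if c then sum f A else 0)"
  by simp

lemma sum_UNIV_pairs: "(\<Sum>r\<in>UNIV. g r) = (\<Sum>a\<in>UNIV. \<Sum>b\<in>UNIV. g (a, b))"
  by (metis UNIV_Times_UNIV sum.cartesian_product')

lemma sum_rotate3: "(\<Sum>a\<in>A. \<Sum>b\<in>B. \<Sum>c\<in>C. f a b c) = (\<Sum>c\<in>C. \<Sum>a\<in>A. \<Sum>b\<in>B. f a b c)"
  by (subst sum.swap) (simp only: sum.swap[of _ B])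

lemma sum_swap_pairs: "(\<Sum>a\<in>A. \<Sum>b\<in>B. \<Sum>c\<in>C. \<Sum>d\<in>D. f a b c d) =
    (\<Sum>c\<in>C. \<Sum>d\<in>D. \<Sum>a\<in>A. \<Sum>b\<in>B. f a b c d)"
  by (subst sum_rotate3, rule sum.cong[OF refl], subst sum.swap, rule sum.cong[OF refl], rule sum.swap)

lemma tens_nth [simp]: "tens u w $ (p, q) = u $ p * w $ q"
  by (simp add: tens_def)

lemma tens_expand: "X = (\<Sum>s\<in>UNIV. \<Sum>t\<in>UNIV. X $ (s, t) *s tens (ebas s) (ebas t))"
  by (simp add: vec_eq_iff mult.assoc[symmetric] mult_delta_left mult_delta_right sum_if_zero)

(* eval_tens X f g = (f \<otimes> g)(X) for X in A \<otimes> A. *)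
definition eval_tens :: "complex ^ ('b::finite \<times> 'b) \<Rightarrow> (complex ^ 'b \<Rightarrow> complex) \<Rightarrow> (complex ^ 'b \<Rightarrow> complex)
    \<Rightarrow> complex" where
  "eval_tens X f g = (\<Sum>k\<in>UNIV. \<Sum>l\<in>UNIV. X $ (k, l) * f (ebas k) * g (ebas l))"

lemma eval_tens_sum: "eval_tens (\<Sum>n\<in>A. X n) f g = (\<Sum>n\<in>A. eval_tens (X n) f g)"
  by (induction A rule: infinite_finite_induct)
    (simp_all add: eval_tens_def distrib_right sum.distrib)

lemma eval_tens_smult: "eval_tens (c *s X) f g = c * eval_tens X f g"
  by (simp add: eval_tens_def sum_distrib_left mult.assoc)

lemma eval_tens_component_left: "eval_tens X (\<lambda>u. u $ s) g = (\<Sum>l\<in>UNIV. X $ (s, l) * g (ebas l))"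
  and eval_tens_component_right: "eval_tens X f (\<lambda>u. u $ t) = (\<Sum>k\<in>UNIV. X $ (k, t) * f (ebas k))"
  by (simp_all add: eval_tens_def mult_delta_left mult_delta_right sum_if_zero mult.commute cong: if_cong)

lemma eval_tens_tens: "clin_fun f \<Longrightarrow> clin_fun g \<Longrightarrow> eval_tens (tens u w) f g = f u * g w"
  by (simp add: eval_tens_def clin_fun_expand[of f u] clin_fun_expand[of g w] sum_product mult_ac)

section \<open>Weak bialgebras in coordinates\<close>

locale weak_bialg =
  fixes mul :: "complex ^ 'b::finite \<Rightarrow> complex ^ 'b \<Rightarrow> complex ^ 'b"
    and one :: "complex ^ 'b"
    and cop :: "complex ^ 'b \<Rightarrow> complex ^ ('b \<times> 'b)"
    and cou :: "complex ^ 'b \<Rightarrow> complex"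
  assumes weak_bialgebra: "weak_bialgebra mul one cop cou"
begin

lemma mul_clin_left: "clin_map (mul x)"
  and mul_clin_right: "clin_map (\<lambda>x. mul x y)"
  and mul_assoc: "mul (mul x y) z = mul x (mul y z)"
  and mul_one_left: "mul one x = x"
  and mul_one_right: "mul x one = x"
  and cou_clin: "clin_fun cou"
  and coassoc: "cop_left cop (cop x) = cop_right cop (cop x)"
  and counit_left: "(\<Sum>i\<in>UNIV. cop x $ (i, k) * cou (ebas i)) = x $ k"
  and counit_right: "(\<Sum>j\<in>UNIV. cop x $ (k, j) * cou (ebas j)) = x $ k"
  and cop_mul: "cop (mul x y) = mul2 mul (cop x) (cop y)"
  using weak_bialgebra unfolding weak_bialgebra_def by auto

lemma cop2_one: "cop_right cop (cop one) = mul3 mul (vec_lambda (\<lambda>(p, q, r). one $ p * cop one $ (q, r)))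
      (vec_lambda (\<lambda>(p, q, r). cop one $ (p, q) * one $ r))"
    "cop_right cop (cop one) = mul3 mul (vec_lambda (\<lambda>(p, q, r). cop one $ (p, q) * one $ r))
      (vec_lambda (\<lambda>(p, q, r). one $ p * cop one $ (q, r)))"
  using weak_bialgebra unfolding weak_bialgebra_def Let_def by auto

lemma cou_mul_cop: "cou (mul (mul x y) z) =
      (\<Sum>i\<in>UNIV. \<Sum>j\<in>UNIV. cop y $ (i, j) * cou (mul x (ebas i)) * cou (mul (ebas j) z))"
    and cou_mul_cop': "cou (mul (mul x y) z) =
      (\<Sum>i\<in>UNIV. \<Sum>j\<in>UNIV. cop y $ (i, j) * cou (mul x (ebas j)) * cou (mul (ebas i) z))"
  using weak_bialgebra unfolding weak_bialgebra_def by blast+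

lemma sum_mul_ebas_left: "clin_fun f \<Longrightarrow> (\<Sum>i\<in>UNIV. x $ i * f (mul (ebas i) y)) = f (mul x y)"
  using clin_fun_expand[OF clin_fun_comp[OF _ mul_clin_right], of f x y] by simp

lemma sum_mul_ebas_right: "clin_fun f \<Longrightarrow> (\<Sum>i\<in>UNIV. y $ i * f (mul x (ebas i))) = f (mul x y)"
  using clin_fun_expand[OF clin_fun_comp[OF _ mul_clin_left], of f x y] by simp

lemma mul_nth: "mul x y $ r = (\<Sum>i\<in>UNIV. \<Sum>k\<in>UNIV. x $ i * y $ k * mul (ebas i) (ebas k) $ r)"
proof -
  have "mul x y $ r = (\<Sum>i\<in>UNIV. x $ i * mul (ebas i) y $ r)"
    by (rule sum_mul_ebas_left[OF clin_fun_component, symmetric])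
  also have "\<dots> = (\<Sum>i\<in>UNIV. x $ i * (\<Sum>k\<in>UNIV. y $ k * mul (ebas i) (ebas k) $ r))"
    by (simp only: sum_mul_ebas_right[OF clin_fun_component])
  finally show ?thesis by (simp add: sum_distrib_left mult.assoc)
qed

lemma mul2_nth: "mul2 mul X Y $ (p, q) = (\<Sum>i\<in>UNIV. \<Sum>j\<in>UNIV. \<Sum>k\<in>UNIV. \<Sum>l\<in>UNIV.
    X $ (i, j) * Y $ (k, l) * mul (ebas i) (ebas k) $ p * mul (ebas j) (ebas l) $ q)"
  by (simp add: mul2_def)

lemma mul2_sum_left: "mul2 mul (\<Sum>n\<in>A. X n) Y = (\<Sum>n\<in>A. mul2 mul (X n) Y)"
  and mul2_sum_right: "mul2 mul Y (\<Sum>n\<in>A. X n) = (\<Sum>n\<in>A. mul2 mul Y (X n))"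
  by (simp_all add: vec_eq_iff mul2_nth sum_distrib_left sum_distrib_right
      sum.swap[of _ A] mult_ac)

lemma mul2_smult_left: "mul2 mul (c *s X) Y = c *s mul2 mul X Y"
  and mul2_smult_right: "mul2 mul X (c *s Y) = c *s mul2 mul X Y"
  by (simp_all add: vec_eq_iff mul2_nth sum_distrib_left mult_ac)

lemma mul2_tens: "mul2 mul (tens a b) (tens c d) = tens (mul a c) (mul b d)"
  by (simp add: vec_eq_iff mul2_nth mul_nth[of a c] mul_nth[of b d] sum_product mult_ac)

lemma mul2_assoc: "mul2 mul (mul2 mul X Y) Z = mul2 mul X (mul2 mul Y Z)"
  by (subst (1 2) tens_expand[of X], subst (1 2) tens_expand[of Y], subst (1 2) tens_expand[of Z])
    (simp only: mul2_sum_left mul2_sum_right mul2_smult_left mul2_smult_right mul2_tens mul_assoc)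

lemma mul2_cop_one_left: "mul2 mul (cop one) (cop x) = cop x"
  and mul2_cop_one_right: "mul2 mul (cop x) (cop one) = cop x"
  by (simp_all flip: cop_mul add: mul_one_left mul_one_right)

lemma mul3_tens: "mul3 mul (tens a (tens b c)) (tens a' (tens b' c')) =
    tens (mul a a') (tens (mul b b') (mul c c'))"
proof -
  have "mul3 mul (tens a (tens b c)) (tens a' (tens b' c')) $ (p, q, r) =
      tens (mul a a') (tens (mul b b') (mul c c')) $ (p, q, r)" for p q r
  proof -
    have "mul3 mul (tens a (tens b c)) (tens a' (tens b' c')) $ (p, q, r) =
      (\<Sum>i\<in>UNIV. \<Sum>i'\<in>UNIV. \<Sum>j\<in>UNIV. \<Sum>j'\<in>UNIV. \<Sum>k\<in>UNIV. \<Sum>k'\<in>UNIV.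
        a $ i * (b $ j * c $ k) * (a' $ i' * (b' $ j' * c' $ k')) * mul (ebas i) (ebas i') $ p
        * mul (ebas j) (ebas j') $ q * mul (ebas k) (ebas k') $ r)"
      unfolding mul3_def tens_nth vec_lambda_beta prod.case
      by (rule sum.cong[OF refl], subst sum_rotate3, rule sum.cong[OF refl],
          rule sum.cong[OF refl], rule sum.swap)
    also have "\<dots> = mul c c' $ r * (mul b b' $ q * mul a a' $ p)"
      by (simp only: mul_nth[of a a'] mul_nth[of b b'] mul_nth[of c c']
          sum_distrib_left sum_distrib_right) (simp add: mult_ac)
    finally show ?thesis by (simp add: mult_ac)
  qed
  then show ?thesis by (simp add: vec_eq_iff)
qed

lemma mul3_sum_left: "mul3 mul (\<Sum>n\<in>A. X n) Y = (\<Sum>n\<in>A. mul3 mul (X n) Y)"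
  and mul3_sum_right: "mul3 mul Y (\<Sum>n\<in>A. X n) = (\<Sum>n\<in>A. mul3 mul Y (X n))"
  by (simp_all add: vec_eq_iff mul3_def sum_distrib_left sum_distrib_right
      sum.swap[of _ A] mult_ac)

lemma mul3_smult_left: "mul3 mul (c *s X) Y = c *s mul3 mul X Y"
  and mul3_smult_right: "mul3 mul X (c *s Y) = c *s mul3 mul X Y"
  by (simp_all add: vec_eq_iff mul3_def sum_distrib_left mult_ac)

lemma cop_one_left_factor: "vec_lambda (\<lambda>(p, q, r). one $ p * cop one $ (q, r)) =
    (\<Sum>j\<in>UNIV. \<Sum>k\<in>UNIV. cop one $ (j, k) *s tens one (tens (ebas j) (ebas k)))"
  by (simp add: vec_eq_iff mult.assoc[symmetric] mult_delta_left mult_delta_right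
      cong: if_cong)

lemma cop_one_right_factor: "vec_lambda (\<lambda>(p, q, r). cop one $ (p, q) * one $ r) =
    (\<Sum>j\<in>UNIV. \<Sum>k\<in>UNIV. cop one $ (j, k) *s tens (ebas j) (tens (ebas k) one))"
  by (simp add: vec_eq_iff mult.assoc[symmetric] mult_delta_left mult_delta_right
      sum_if_zero cong: if_cong)

(* The two factorisations of \<Delta>\<^sup>2(1) required of a weak bialgebra, in Sweedler notation
   1_(1) \<otimes> 1'_(1) 1_(2) \<otimes> 1'_(2) and 1_(1) \<otimes> 1_(2) 1'_(1) \<otimes> 1'_(2). *)
lemma cop2_one_nth: "cop_right cop (cop one) $ (p, q, r) =
    (\<Sum>k\<in>UNIV. \<Sum>l\<in>UNIV. cop one $ (p, k) * cop one $ (l, r) * mul (ebas l) (ebas k) $ q)"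
  unfolding cop2_one(1) cop_one_left_factor cop_one_right_factor
  by (simp add: mul3_sum_left mul3_sum_right mul3_smult_left mul3_smult_right mul3_tens mul_one_left
      mul_one_right mult.assoc[symmetric] mult_delta_left mult_delta_right
      sum_if_zero sum_distrib_left)

lemma cop2_one_nth': "cop_right cop (cop one) $ (p, q, r) =
    (\<Sum>k\<in>UNIV. \<Sum>l\<in>UNIV. cop one $ (p, k) * cop one $ (l, r) * mul (ebas k) (ebas l) $ q)"
  unfolding cop2_one(2) cop_one_left_factor cop_one_right_factor
  by (simp add: mul3_sum_left mul3_sum_right mul3_smult_left mul3_smult_right mul3_tens mul_one_left
      mul_one_right mult.assoc[symmetric] mult_delta_left mult_delta_right
      sum_if_zero sum_distrib_left, subst sum.swap, simp add: mult_ac)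

abbreviation "\<epsilon>\<^sub>t \<equiv> eps_t mul one cop cou"

abbreviation "\<epsilon>\<^sub>s \<equiv> eps_s mul one cop cou"

lemma eps_t_nth: "\<epsilon>\<^sub>t x $ t = (\<Sum>p\<in>UNIV. cop one $ (p, t) * cou (mul (ebas p) x))"
  by (simp add: eps_t_def mult_delta_right)

lemma eps_s_nth: "\<epsilon>\<^sub>s x $ s = (\<Sum>q\<in>UNIV. cop one $ (s, q) * cou (mul x (ebas q)))"
  by (simp add: eps_s_def mult_delta_right sum_if_zero cong: if_cong)

lemma mul_eps_t_eps_s_nth: "mul (\<epsilon>\<^sub>t x) (\<epsilon>\<^sub>s y) $ r = (\<Sum>p\<in>UNIV. \<Sum>q\<in>UNIV.
    cou (mul (ebas p) x) * cou (mul y (ebas q)) * cop_right cop (cop one) $ (p, r, q))"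
proof -
  have "mul (\<epsilon>\<^sub>t x) (\<epsilon>\<^sub>s y) $ r = (\<Sum>k\<in>UNIV. \<Sum>l\<in>UNIV. \<Sum>p\<in>UNIV. \<Sum>q\<in>UNIV.
      cou (mul (ebas p) x) * cou (mul y (ebas q)) * (cop one $ (p, k) * cop one $ (l, q) * mul (ebas k) (ebas l) $ r))"
    by (simp add: mul_nth[of "\<epsilon>\<^sub>t x"] eps_t_nth eps_s_nth sum_distrib_left sum_distrib_right mult_ac)
  then show ?thesis
    by (subst (asm) sum_swap_pairs) (simp only: cop2_one_nth' sum_distrib_left)
qed

lemma mul_eps_s_eps_t_nth: "mul (\<epsilon>\<^sub>s y) (\<epsilon>\<^sub>t x) $ r = (\<Sum>p\<in>UNIV. \<Sum>q\<in>UNIV.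
    cou (mul (ebas p) x) * cou (mul y (ebas q)) * cop_right cop (cop one) $ (p, r, q))"
proof -
  have "mul (\<epsilon>\<^sub>s y) (\<epsilon>\<^sub>t x) $ r = (\<Sum>k\<in>UNIV. \<Sum>l\<in>UNIV. \<Sum>p\<in>UNIV. \<Sum>q\<in>UNIV.
      cou (mul (ebas p) x) * cou (mul y (ebas q)) * (cop one $ (p, l) * cop one $ (k, q) * mul (ebas k) (ebas l) $ r))"
    by (simp add: mul_nth[of "\<epsilon>\<^sub>s y"] eps_t_nth eps_s_nth sum_distrib_left sum_distrib_right mult_ac)
  also have "\<dots> = (\<Sum>l\<in>UNIV. \<Sum>k\<in>UNIV. \<Sum>p\<in>UNIV. \<Sum>q\<in>UNIV.
      cou (mul (ebas p) x) * cou (mul y (ebas q)) * (cop one $ (p, l) * cop one $ (k, q) * mul (ebas k) (ebas l) $ r))"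
    by (rule sum.swap)
  finally show ?thesis
    by (subst (asm) sum_swap_pairs) (simp only: cop2_one_nth sum_distrib_left)
qed

lemma eps_t_eps_s_commute: "mul (\<epsilon>\<^sub>t x) (\<epsilon>\<^sub>s y) = mul (\<epsilon>\<^sub>s y) (\<epsilon>\<^sub>t x)"
  by (simp add: vec_eq_iff mul_eps_t_eps_s_nth mul_eps_s_eps_t_nth)

lemma mul2_tens_one_left_nth: "mul2 mul (tens one y) X $ (a, b) = (\<Sum>m\<in>UNIV. X $ (a, m) * mul y (ebas m) $ b)"
  by (subst tens_expand[of X])
    (simp add: mul2_sum_right mul2_smult_right mul2_tens mul_one_left mult_delta_left
      mult_delta_right sum_if_zero cong: if_cong)

lemma mul2_tens_one_right_nth: "mul2 mul X (tens y one) $ (a, b) = (\<Sum>m\<in>UNIV. X $ (m, b) * mul (ebas m) y $ a)"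
  by (subst tens_expand[of X])
    (simp add: mul2_sum_left mul2_smult_left mul2_tens mul_one_right mult_delta_left
      mult_delta_right sum_if_zero mult.commute cong: if_cong)

lemma eval_tens_mul2_tens_one_left:
  assumes "clin_fun g"
  shows "eval_tens (mul2 mul (tens one y) X) (\<lambda>u. u $ s) g = (\<Sum>m\<in>UNIV. X $ (s, m) * g (mul y (ebas m)))"
proof -
  have "eval_tens (mul2 mul (tens one y) X) (\<lambda>u. u $ s) g =
      (\<Sum>k\<in>UNIV. \<Sum>m\<in>UNIV. X $ (s, m) * (mul y (ebas m) $ k * g (ebas k)))"
    by (simp add: eval_tens_component_left mul2_tens_one_left_nth sum_distrib_right mult.assoc)
  also have "\<dots> = (\<Sum>m\<in>UNIV. X $ (s, m) * (\<Sum>k\<in>UNIV. mul y (ebas m) $ k * g (ebas k)))"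
    by (subst sum.swap) (simp add: sum_distrib_left)
  finally show ?thesis
    by (simp add: clin_fun_expand[OF assms, of "mul y _"])
qed

lemma eval_tens_mul2_tens_one_right:
  assumes "clin_fun f"
  shows "eval_tens (mul2 mul X (tens y one)) f (\<lambda>u. u $ t) = (\<Sum>m\<in>UNIV. X $ (m, t) * f (mul (ebas m) y))"
proof -
  have "eval_tens (mul2 mul X (tens y one)) f (\<lambda>u. u $ t) =
      (\<Sum>k\<in>UNIV. \<Sum>m\<in>UNIV. X $ (m, t) * (mul (ebas m) y $ k * f (ebas k)))"
    by (simp add: eval_tens_component_right mul2_tens_one_right_nth sum_distrib_right mult.assoc)
  also have "\<dots> = (\<Sum>m\<in>UNIV. X $ (m, t) * (\<Sum>k\<in>UNIV. mul (ebas m) y $ k * f (ebas k)))"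
    by (subst sum.swap) (simp add: sum_distrib_left)
  finally show ?thesis
    by (simp add: clin_fun_expand[OF assms, of "mul _ y"])
qed

lemma sum_cop_one_cop_left: "(\<Sum>p\<in>UNIV. cop one $ (p, t) *s cop (ebas p)) =
    (\<Sum>l\<in>UNIV. cop one $ (l, t) *s mul2 mul (tens one (ebas l)) (cop one))"
proof -
  have "(\<Sum>p\<in>UNIV. cop one $ (p, t) *s cop (ebas p)) $ (a, b) = cop_left cop (cop one) $ (a, b, t)" for a b
    by (simp add: cop_left_def mult.commute)
  also have "\<dots> a b = (\<Sum>l\<in>UNIV. \<Sum>k\<in>UNIV. cop one $ (l, t) * (cop one $ (a, k) * mul (ebas l) (ebas k) $ b))"
    for a b
    unfolding coassoc cop2_one_nth by (subst sum.swap) (simp add: mult_ac)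
  finally show ?thesis
    by (simp add: vec_eq_iff mul2_tens_one_left_nth sum_distrib_left)
qed

lemma sum_cop_one_cop_right: "(\<Sum>q\<in>UNIV. cop one $ (s, q) *s cop (ebas q)) =
    (\<Sum>k\<in>UNIV. cop one $ (s, k) *s mul2 mul (cop one) (tens (ebas k) one))"
proof -
  have "(\<Sum>q\<in>UNIV. cop one $ (s, q) *s cop (ebas q)) $ (a, b) = cop_right cop (cop one) $ (s, a, b)" for a b
    by (simp add: cop_right_def)
  then show ?thesis
    by (simp add: vec_eq_iff cop2_one_nth mul2_tens_one_right_nth sum_distrib_left mult_ac)
qed

(* (id \<otimes> \<epsilon>_t) \<Delta>(x) = \<Delta>(1) (x \<otimes> 1) and (\<epsilon>_s \<otimes> id) \<Delta>(x) = (1 \<otimes> x) \<Delta>(1), in coordinates. *)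
lemma sum_cop_one_mul_left: "(\<Sum>p\<in>UNIV. cop one $ (p, t) * mul (ebas p) x $ s) =
    (\<Sum>l\<in>UNIV. cop one $ (l, t) * (\<Sum>b\<in>UNIV. cop x $ (s, b) * cou (mul (ebas l) (ebas b))))"
proof -
  have "(\<Sum>p\<in>UNIV. cop one $ (p, t) * mul (ebas p) x $ s) =
      eval_tens (mul2 mul (\<Sum>p\<in>UNIV. cop one $ (p, t) *s cop (ebas p)) (cop x)) (\<lambda>u. u $ s) cou"
  proof -
    have "mul (ebas p) x $ s = eval_tens (cop (mul (ebas p) x)) (\<lambda>u. u $ s) cou" for p
      by (simp add: eval_tens_component_left counit_right)
    then show ?thesis
      by (simp add: cop_mul mul2_sum_left mul2_smult_left eval_tens_sum eval_tens_smult)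
  qed
  also have "\<dots> = (\<Sum>l\<in>UNIV. cop one $ (l, t) * eval_tens (mul2 mul (tens one (ebas l)) (cop x)) (\<lambda>u. u $ s) cou)"
    by (simp add: sum_cop_one_cop_left mul2_sum_left mul2_smult_left mul2_assoc mul2_cop_one_left
        eval_tens_sum eval_tens_smult)
  also have "\<dots> = (\<Sum>l\<in>UNIV. cop one $ (l, t) * (\<Sum>b\<in>UNIV. cop x $ (s, b) * cou (mul (ebas l) (ebas b))))"
    by (simp add: eval_tens_mul2_tens_one_left[OF cou_clin])
  finally show ?thesis .
qed

lemma sum_cop_one_mul_right: "(\<Sum>q\<in>UNIV. cop one $ (s, q) * mul x (ebas q) $ t) =
    (\<Sum>k\<in>UNIV. cop one $ (s, k) * (\<Sum>a\<in>UNIV. cop x $ (a, t) * cou (mul (ebas a) (ebas k))))"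
proof -
  have "(\<Sum>q\<in>UNIV. cop one $ (s, q) * mul x (ebas q) $ t) =
      eval_tens (mul2 mul (cop x) (\<Sum>q\<in>UNIV. cop one $ (s, q) *s cop (ebas q))) cou (\<lambda>u. u $ t)"
  proof -
    have "mul x (ebas q) $ t = eval_tens (cop (mul x (ebas q))) cou (\<lambda>u. u $ t)" for q
      by (simp add: eval_tens_component_right counit_left)
    then show ?thesis
      by (simp add: cop_mul mul2_sum_right mul2_smult_right eval_tens_sum eval_tens_smult)
  qed
  also have "\<dots> = (\<Sum>k\<in>UNIV. cop one $ (s, k) * eval_tens (mul2 mul (cop x) (tens (ebas k) one)) cou (\<lambda>u. u $ t))"
    by (simp add: sum_cop_one_cop_right mul2_sum_right mul2_smult_right mul2_assoc[symmetric]
        mul2_cop_one_right eval_tens_sum eval_tens_smult)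
  also have "\<dots> = (\<Sum>k\<in>UNIV. cop one $ (s, k) * (\<Sum>a\<in>UNIV. cop x $ (a, t) * cou (mul (ebas a) (ebas k))))"
    by (simp add: eval_tens_mul2_tens_one_right[OF cou_clin])
  finally show ?thesis .
qed

lemma clin_fun_eps_t_nth: "clin_fun (\<lambda>x. \<epsilon>\<^sub>t x $ t)"
  and clin_fun_eps_s_nth: "clin_fun (\<lambda>x. \<epsilon>\<^sub>s x $ s)"
  using clin_fun_comp[OF cou_clin mul_clin_left] clin_fun_comp[OF cou_clin mul_clin_right]
  by (simp_all add: clin_fun_def eps_t_nth eps_s_nth sum.distrib sum_distrib_left distrib_left mult_ac)

lemma eps_s_eps_t_cop_flip:
  "(\<Sum>i\<in>UNIV. \<Sum>j\<in>UNIV. cop y $ (i, j) * (\<epsilon>\<^sub>t (ebas i) $ t * \<epsilon>\<^sub>s (ebas j) $ s)) =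
    (\<Sum>i\<in>UNIV. \<Sum>j\<in>UNIV. cop y $ (i, j) * (\<epsilon>\<^sub>s (ebas i) $ s * \<epsilon>\<^sub>t (ebas j) $ t))"
proof -
  let ?c = "\<lambda>p q. cop one $ (p, t) * (cop one $ (s, q) * cou (mul (mul (ebas p) y) (ebas q)))"
  have "(\<Sum>i\<in>UNIV. \<Sum>j\<in>UNIV. cop y $ (i, j) * (\<epsilon>\<^sub>t (ebas i) $ t * \<epsilon>\<^sub>s (ebas j) $ s)) =
      (\<Sum>i\<in>UNIV. \<Sum>j\<in>UNIV. \<Sum>q\<in>UNIV. \<Sum>p\<in>UNIV. cop one $ (p, t) * (cop one $ (s, q) *
        (cop y $ (i, j) * (cou (mul (ebas j) (ebas q)) * cou (mul (ebas p) (ebas i))))))"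
    by (simp add: eps_s_nth eps_t_nth sum_distrib_left sum_distrib_right mult_ac)
  also have "\<dots> = (\<Sum>q\<in>UNIV. \<Sum>p\<in>UNIV. ?c p q)"
    by (subst sum_swap_pairs) (simp add: cou_mul_cop sum_distrib_left mult_ac)
  finally have flipped: "(\<Sum>i\<in>UNIV. \<Sum>j\<in>UNIV. cop y $ (i, j) * (\<epsilon>\<^sub>t (ebas i) $ t * \<epsilon>\<^sub>s (ebas j) $ s)) =
      (\<Sum>q\<in>UNIV. \<Sum>p\<in>UNIV. ?c p q)" .
  have "(\<Sum>i\<in>UNIV. \<Sum>j\<in>UNIV. cop y $ (i, j) * (\<epsilon>\<^sub>s (ebas i) $ s * \<epsilon>\<^sub>t (ebas j) $ t)) =
      (\<Sum>i\<in>UNIV. \<Sum>j\<in>UNIV. \<Sum>q\<in>UNIV. \<Sum>p\<in>UNIV. cop one $ (p, t) * (cop one $ (s, q) *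
        (cop y $ (i, j) * (cou (mul (ebas i) (ebas q)) * cou (mul (ebas p) (ebas j))))))"
    by (simp add: eps_s_nth eps_t_nth sum_distrib_left sum_distrib_right mult_ac)
  also have "\<dots> = (\<Sum>q\<in>UNIV. \<Sum>p\<in>UNIV. ?c p q)"
    by (subst sum_swap_pairs) (simp add: cou_mul_cop' sum_distrib_left mult_ac)
  finally show ?thesis
    by (simp only: flipped)
qed

end

locale weak_bialg_corep = weak_bialg mul one cop cou
  for mul :: "complex ^ 'b::finite \<Rightarrow> complex ^ 'b \<Rightarrow> complex ^ 'b"
    and one :: "complex ^ 'b"
    and cop :: "complex ^ 'b \<Rightarrow> complex ^ ('b \<times> 'b)"
    and cou :: "complex ^ 'b \<Rightarrow> complex" +
  fixes v :: "'d::finite \<Rightarrow> 'd \<Rightarrow> complex ^ 'b"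
  assumes corep: "corep cop cou v"
begin

lemma cop_corep_nth: "cop (v i j) $ (p, q) = (\<Sum>k\<in>UNIV. v i k $ p * v k j $ q)"
  using corep by (simp add: corep_def)

lemma sum_cop_corep_left: "(\<Sum>b\<in>UNIV. cop (v i j) $ (s, b) * f (ebas b)) = (\<Sum>k\<in>UNIV. v i k $ s * f (v k j))"
  if "clin_fun f"
  by (simp add: cop_corep_nth clin_fun_expand[OF that, of "v _ j"] sum_distrib_left sum_distrib_right
      mult.assoc, rule sum.swap)

lemma sum_cop_corep_right: "(\<Sum>a\<in>UNIV. cop (v i j) $ (a, t) * f (ebas a)) = (\<Sum>k\<in>UNIV. f (v i k) * v k j $ t)"
  if "clin_fun f"
  by (simp add: cop_corep_nth clin_fun_expand[OF that, of "v i _"] sum_distrib_left sum_distrib_right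
      mult_ac, rule sum.swap)

lemma sum_cop_corep: "(\<Sum>i\<in>UNIV. \<Sum>j\<in>UNIV. cop (v x y) $ (i, j) * (f (ebas i) * g (ebas j))) =
    (\<Sum>m\<in>UNIV. f (v x m) * g (v m y))"
  if "clin_fun f" "clin_fun g"
proof -
  have "(\<Sum>i\<in>UNIV. \<Sum>j\<in>UNIV. cop (v x y) $ (i, j) * (f (ebas i) * g (ebas j))) =
      (\<Sum>i\<in>UNIV. \<Sum>j\<in>UNIV. \<Sum>m\<in>UNIV. v x m $ i * f (ebas i) * (v m y $ j * g (ebas j)))"
    by (simp add: cop_corep_nth sum_distrib_left sum_distrib_right mult_ac)
  also have "\<dots> = (\<Sum>m\<in>UNIV. \<Sum>i\<in>UNIV. \<Sum>j\<in>UNIV. v x m $ i * f (ebas i) * (v m y $ j * g (ebas j)))"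
    by (rule sum_rotate3)
  finally show ?thesis
    by (simp add: clin_fun_expand[OF that(1), of "v x _"] clin_fun_expand[OF that(2), of "v _ y"]
        sum_product)
qed

lemma corep_tens_eps_t: "(\<Sum>k\<in>UNIV. tens (v i k) (\<epsilon>\<^sub>t (v k j))) = mul2 mul (cop one) (tens (v i j) one)"
proof -
  have "(\<Sum>k\<in>UNIV. tens (v i k) (\<epsilon>\<^sub>t (v k j))) $ (s, t) =
      (\<Sum>k\<in>UNIV. \<Sum>l\<in>UNIV. cop one $ (l, t) * (v i k $ s * cou (mul (ebas l) (v k j))))" for s t
    by (simp add: eps_t_nth sum_distrib_left mult_ac)
  also have "\<dots> s t =
      (\<Sum>l\<in>UNIV. cop one $ (l, t) * (\<Sum>b\<in>UNIV. cop (v i j) $ (s, b) * cou (mul (ebas l) (ebas b))))" for s t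
    by (subst sum.swap) (simp add: sum_cop_corep_left[OF clin_fun_comp[OF cou_clin mul_clin_left]]
        sum_distrib_left)
  finally show ?thesis
    by (simp add: vec_eq_iff sum_cop_one_mul_left mul2_tens_one_right_nth)
qed

lemma corep_tens_eps_s: "(\<Sum>k\<in>UNIV. tens (\<epsilon>\<^sub>s (v i k)) (v k j)) = mul2 mul (tens one (v i j)) (cop one)"
proof -
  have "(\<Sum>k\<in>UNIV. tens (\<epsilon>\<^sub>s (v i k)) (v k j)) $ (s, t) =
      (\<Sum>k\<in>UNIV. \<Sum>q\<in>UNIV. cop one $ (s, q) * (cou (mul (v i k) (ebas q)) * v k j $ t))" for s t
    by (simp add: eps_s_nth sum_distrib_left sum_distrib_right mult_ac)
  also have "\<dots> s t =
      (\<Sum>q\<in>UNIV. cop one $ (s, q) * (\<Sum>a\<in>UNIV. cop (v i j) $ (a, t) * cou (mul (ebas a) (ebas q))))" for s t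
    by (subst sum.swap) (simp add: sum_cop_corep_right[OF clin_fun_comp[OF cou_clin mul_clin_right]]
        sum_distrib_left)
  finally show ?thesis
    by (simp add: vec_eq_iff sum_cop_one_mul_right mul2_tens_one_left_nth)
qed

lemma corep_eps_s_eps_t_absorb:
  "(\<Sum>e\<in>UNIV. \<Sum>b\<in>UNIV. tens (mul (\<epsilon>\<^sub>s (v i' e)) (v i b)) (mul (v e j') (\<epsilon>\<^sub>t (v b j)))) =
    (\<Sum>b\<in>UNIV. tens (v i b) (mul (v i' j') (\<epsilon>\<^sub>t (v b j))))"
proof -
  have "(\<Sum>e\<in>UNIV. \<Sum>b\<in>UNIV. tens (mul (\<epsilon>\<^sub>s (v i' e)) (v i b)) (mul (v e j') (\<epsilon>\<^sub>t (v b j)))) =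
      mul2 mul (\<Sum>e\<in>UNIV. tens (\<epsilon>\<^sub>s (v i' e)) (v e j')) (\<Sum>b\<in>UNIV. tens (v i b) (\<epsilon>\<^sub>t (v b j)))"
    by (simp add: mul2_sum_left mul2_sum_right mul2_tens, rule sum.swap)
  also have "\<dots> = mul2 mul (mul2 mul (tens one (v i' j')) (cop one)) (mul2 mul (cop one) (tens (v i j) one))"
    by (simp only: corep_tens_eps_s corep_tens_eps_t)
  also have "\<dots> = mul2 mul (tens one (v i' j')) (mul2 mul (cop one) (tens (v i j) one))"
    by (simp only: mul2_assoc[of "tens one _" "cop one"] mul2_assoc[of "cop one" "cop one", symmetric]
        mul2_cop_one_left)
  also have "\<dots> = (\<Sum>b\<in>UNIV. tens (v i b) (mul (v i' j') (\<epsilon>\<^sub>t (v b j))))"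
    by (simp add: corep_tens_eps_t[symmetric] mul2_sum_right mul2_tens mul_one_left)
  finally show ?thesis .
qed

lemma corep_eps_s_eps_t_flip:
  "(\<Sum>m\<in>UNIV. tens (\<epsilon>\<^sub>s (v m y)) (\<epsilon>\<^sub>t (v x m))) = (\<Sum>m\<in>UNIV. tens (\<epsilon>\<^sub>s (v x m)) (\<epsilon>\<^sub>t (v m y)))"
proof -
  have "(\<Sum>m\<in>UNIV. \<epsilon>\<^sub>s (v m y) $ s * \<epsilon>\<^sub>t (v x m) $ t) =
      (\<Sum>i\<in>UNIV. \<Sum>j\<in>UNIV. cop (v x y) $ (i, j) * (\<epsilon>\<^sub>t (ebas i) $ t * \<epsilon>\<^sub>s (ebas j) $ s))" for s t
    by (subst sum_cop_corep[OF clin_fun_eps_t_nth clin_fun_eps_s_nth]) (simp only: mult.commute)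
  also have "\<dots> s t =
      (\<Sum>i\<in>UNIV. \<Sum>j\<in>UNIV. cop (v x y) $ (i, j) * (\<epsilon>\<^sub>s (ebas i) $ s * \<epsilon>\<^sub>t (ebas j) $ t))" for s t
    by (rule eps_s_eps_t_cop_flip)
  finally show ?thesis
    by (simp add: vec_eq_iff sum_cop_corep[OF clin_fun_eps_s_nth clin_fun_eps_t_nth])
qed

end

section \<open>Local operators on a chain of qudits\<close>

(* X_01 Y_12 = Y_12 X_01 on three sites, and Q_12 W_01 W_23 P_12 = W_01 W_23 P_12 on four sites,
   written in coordinates. *)
definition overlap_commute :: "complex ^ ('d::finite \<times> 'd) ^ ('d \<times> 'd) \<Rightarrow> complex ^ ('d \<times> 'd) ^ ('d \<times> 'd) \<Rightarrow> bool" where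
  "overlap_commute X Y \<longleftrightarrow> (\<forall>x0 x1 x2 y0 y1 y2.
    (\<Sum>a\<in>UNIV. X $ (x0, x1) $ (y0, a) * Y $ (a, x2) $ (y1, y2)) =
    (\<Sum>a\<in>UNIV. Y $ (x1, x2) $ (a, y2) * X $ (x0, a) $ (y0, y1)))"

definition absorbs :: "complex ^ ('d::finite \<times> 'd) ^ ('d \<times> 'd) \<Rightarrow> complex ^ ('d \<times> 'd) ^ ('d \<times> 'd)
    \<Rightarrow> complex ^ ('d \<times> 'd) ^ ('d \<times> 'd) \<Rightarrow> bool" where
  "absorbs Q W P \<longleftrightarrow> (\<forall>x0 x1 x2 x3 y0 y1 y2 y3.
    (\<Sum>c\<in>UNIV. \<Sum>e\<in>UNIV. Q $ (x1, x2) $ (c, e) *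
      (\<Sum>b\<in>UNIV. W $ (x0, c) $ (y0, b) * (\<Sum>a\<in>UNIV. W $ (e, x3) $ (a, y3) * P $ (b, a) $ (y1, y2)))) =
    (\<Sum>b\<in>UNIV. W $ (x0, x1) $ (y0, b) * (\<Sum>a\<in>UNIV. W $ (x2, x3) $ (a, y3) * P $ (b, a) $ (y1, y2))))"

definition agree_off :: "'s set \<Rightarrow> 'd ^ 's \<Rightarrow> 'd ^ 's \<Rightarrow> bool" where
  "agree_off S \<sigma> \<tau> \<longleftrightarrow> (\<forall>m. m \<notin> S \<longrightarrow> \<sigma> $ m = \<tau> $ m)"

definition local_op :: "'s::finite set \<Rightarrow> ('d::finite ^ 's \<Rightarrow> 'd ^ 's \<Rightarrow> complex) \<Rightarrow> complex ^ ('d ^ 's) ^ ('d ^ 's)" where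
  "local_op S T = (\<chi> \<sigma> \<tau>. if agree_off S \<sigma> \<tau> then T \<sigma> \<tau> else 0)"

definition vec_upd :: "'d ^ 's \<Rightarrow> 's \<Rightarrow> 'd \<Rightarrow> 'd ^ 's" where
  "vec_upd \<sigma> k a = (\<chi> m. if m = k then a else \<sigma> $ m)"

definition vec_splice :: "'s set \<Rightarrow> 'd ^ 's \<Rightarrow> 'd ^ 's \<Rightarrow> 'd ^ 's" where
  "vec_splice S \<sigma> \<tau> = (\<chi> m. if m \<in> S then \<tau> $ m else \<sigma> $ m)"

lemma vec_upd_nth [simp]: "vec_upd \<sigma> k a $ m = (if m = k then a else \<sigma> $ m)"
  by (simp add: vec_upd_def)

lemma vec_splice_nth [simp]: "vec_splice S \<sigma> \<tau> $ m = (if m \<in> S then \<tau> $ m else \<sigma> $ m)"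
  by (simp add: vec_splice_def)

lemma emb2_eq_local_op: "emb2 k k' X = local_op {k, k'} (\<lambda>\<sigma> \<tau>. X $ (\<sigma> $ k, \<sigma> $ k') $ (\<tau> $ k, \<tau> $ k'))"
  by (simp add: emb2_def local_op_def agree_off_def)

lemma local_op_cong: "(\<And>\<sigma> \<tau>. agree_off S \<sigma> \<tau> \<Longrightarrow> T \<sigma> \<tau> = T' \<sigma> \<tau>) \<Longrightarrow> local_op S T = local_op S T'"
  by (simp add: local_op_def vec_eq_iff)

lemma agree_off_intermediate:
  "agree_off (S \<union> S') \<sigma> \<tau> \<Longrightarrow>
    {\<rho>. agree_off S \<sigma> \<rho> \<and> agree_off S' \<rho> \<tau>} = {\<rho>. agree_off (S \<inter> S') (vec_splice S \<sigma> \<tau>) \<rho>}"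
  "\<not> agree_off (S \<union> S') \<sigma> \<tau> \<Longrightarrow> {\<rho>. agree_off S \<sigma> \<rho> \<and> agree_off S' \<rho> \<tau>} = {}"
  unfolding agree_off_def by (auto simp: vec_splice_def) (metis+)

lemma local_op_mult: "local_op S T ** local_op S' T' =
    local_op (S \<union> S') (\<lambda>\<sigma> \<tau>. \<Sum>\<rho>\<in>{\<rho>. agree_off (S \<inter> S') (vec_splice S \<sigma> \<tau>) \<rho>}. T \<sigma> \<rho> * T' \<rho> \<tau>)"
proof -
  have "(local_op S T ** local_op S' T') $ \<sigma> $ \<tau> =
      (\<Sum>\<rho>\<in>{\<rho>. agree_off S \<sigma> \<rho> \<and> agree_off S' \<rho> \<tau>}. T \<sigma> \<rho> * T' \<rho> \<tau>)" for \<sigma> \<tau>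
  proof -
    have "(local_op S T ** local_op S' T') $ \<sigma> $ \<tau> =
        (\<Sum>\<rho>\<in>UNIV. if agree_off S \<sigma> \<rho> \<and> agree_off S' \<rho> \<tau> then T \<sigma> \<rho> * T' \<rho> \<tau> else 0)"
      by (auto simp add: matrix_matrix_mult_def local_op_def intro!: sum.cong)
    then show ?thesis
      by (simp add: sum.If_cases)
  qed
  then show ?thesis
    by (simp add: vec_eq_iff local_op_def agree_off_intermediate)
qed

lemma sum_agree_off_empty: "(\<Sum>\<rho>\<in>{\<rho>. agree_off {} \<sigma> \<rho>}. f \<rho>) = f \<sigma>"
proof -
  have "{\<rho>. agree_off {} \<sigma> \<rho>} = {\<sigma>}" by (auto simp: agree_off_def vec_eq_iff)
  then show ?thesis by simp
qed

lemma sum_agree_off_single: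
  "(\<Sum>\<rho>\<in>{\<rho>. agree_off {k} (\<sigma>::'d::finite ^ 's::finite) \<rho>}. f \<rho>) = (\<Sum>a\<in>UNIV. f (vec_upd \<sigma> k a))"
proof -
  have "{\<rho>. agree_off {k} \<sigma> \<rho>} = range (vec_upd \<sigma> k)"
    by (auto simp: agree_off_def vec_eq_iff image_iff)
  moreover have "inj (vec_upd \<sigma> k)"
    by (rule injI) (metis vec_upd_nth)
  ultimately show ?thesis by (simp add: sum.reindex)
qed

lemma sum_agree_off_pair:
  assumes "k \<noteq> k'"
  shows "(\<Sum>\<rho>\<in>{\<rho>. agree_off {k, k'} (\<sigma>::'d::finite ^ 's::finite) \<rho>}. f \<rho>) =
    (\<Sum>a\<in>UNIV. \<Sum>b\<in>UNIV. f (vec_upd (vec_upd \<sigma> k a) k' b))"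
proof -
  let ?g = "\<lambda>(a, b). vec_upd (vec_upd \<sigma> k a) k' b"
  have "{\<rho>. agree_off {k, k'} \<sigma> \<rho>} = range ?g"
  proof (auto simp: agree_off_def)
    fix \<rho> :: "'d ^ 's" assume "\<forall>m. m \<noteq> k \<and> m \<noteq> k' \<longrightarrow> \<sigma> $ m = \<rho> $ m"
    then have "\<rho> = ?g (\<rho> $ k, \<rho> $ k')" using assms by (auto simp: vec_eq_iff)
    then show "\<rho> \<in> range ?g" by blast
  qed
  moreover have "inj ?g"
  proof (rule injI)
    fix x y assume "?g x = ?g y"
    then show "x = y" using assms
      by (cases x, cases y) (metis (no_types, lifting) case_prod_conv vec_upd_nth)
  qed
  ultimately show ?thesis
    by (simp add: sum.reindex sum_UNIV_pairs)
qed

lemma emb2_mult: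
  assumes "k \<noteq> k'"
  shows "emb2 k k' X ** emb2 k k' Y = emb2 k k' (X ** Y)"
  unfolding emb2_eq_local_op local_op_mult Un_absorb Int_absorb
  by (rule local_op_cong) (simp add: sum_agree_off_pair assms matrix_matrix_mult_def sum_UNIV_pairs)

lemma emb2_one: "k \<noteq> k' \<Longrightarrow> emb2 k k' (mat 1) = mat 1"
  by (auto simp: emb2_def mat_def vec_eq_iff)

lemma emb2_commute_disjoint:
  assumes "{k, k'} \<inter> {l, l'} = {}"
  shows "emb2 k k' X ** emb2 l l' Y = emb2 l l' Y ** emb2 k k' X"
proof -
  have inter: "{l, l'} \<inter> {k, k'} = {}" and union: "{l, l'} \<union> {k, k'} = {k, k'} \<union> {l, l'}"
    using assms by auto
  show ?thesis
    unfolding emb2_eq_local_op local_op_mult assms inter union sum_agree_off_empty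
    by (rule local_op_cong) (use assms in \<open>auto simp: mult.commute\<close>)
qed

lemma emb2_commute_overlap:
  assumes "distinct [k0, k1, k2]" and "overlap_commute X Y"
  shows "emb2 k0 k1 X ** emb2 k1 k2 Y = emb2 k1 k2 Y ** emb2 k0 k1 X"
proof -
  have inter: "{k0, k1} \<inter> {k1, k2} = {k1}" "{k1, k2} \<inter> {k0, k1} = {k1}"
    and union: "{k1, k2} \<union> {k0, k1} = {k0, k1} \<union> {k1, k2}"
    using assms(1) by auto
  show ?thesis
    unfolding emb2_eq_local_op local_op_mult inter union sum_agree_off_single
    by (intro local_op_cong) (use assms in \<open>auto simp: overlap_commute_def\<close>)
qed

lemma emb2_absorbs:
  fixes s0 s1 s2 s3 :: "'s::finite" and Q W P :: "complex ^ ('d::finite \<times> 'd) ^ ('d \<times> 'd)"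
  assumes distinct: "distinct [s0, s1, s2, s3]" and "absorbs Q W P"
  shows "emb2 s1 s2 Q ** (emb2 s0 s1 W ** (emb2 s2 s3 W ** emb2 s1 s2 P)) =
    emb2 s0 s1 W ** (emb2 s2 s3 W ** emb2 s1 s2 P)"
proof -
  define T1 where "T1 \<sigma> \<tau> =
    (\<Sum>a\<in>UNIV. W $ (\<sigma> $ s2, \<sigma> $ s3) $ (a, \<tau> $ s3) * P $ (\<sigma> $ s1, a) $ (\<tau> $ s1, \<tau> $ s2))"
    for \<sigma> \<tau> :: "'d ^ 's"
  define T2 where "T2 \<sigma> \<tau> = (\<Sum>b\<in>UNIV. W $ (\<sigma> $ s0, \<sigma> $ s1) $ (\<tau> $ s0, b) *
    (\<Sum>a\<in>UNIV. W $ (\<sigma> $ s2, \<sigma> $ s3) $ (a, \<tau> $ s3) * P $ (b, a) $ (\<tau> $ s1, \<tau> $ s2)))"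
    for \<sigma> \<tau> :: "'d ^ 's"
  have "{s2, s3} \<inter> {s1, s2} = {s2}" and "{s2, s3} \<union> {s1, s2} = {s1, s2, s3}"
    and "{s0, s1} \<inter> {s1, s2, s3} = {s1}" and "{s0, s1} \<union> {s1, s2, s3} = {s0, s1, s2, s3}"
    and "{s1, s2} \<inter> {s0, s1, s2, s3} = {s1, s2}" and "{s1, s2} \<union> {s0, s1, s2, s3} = {s0, s1, s2, s3}"
    using distinct by auto
  note supports = this
  have "emb2 s2 s3 W ** emb2 s1 s2 P = local_op {s1, s2, s3} T1"
    unfolding emb2_eq_local_op local_op_mult supports sum_agree_off_single
    by (rule local_op_cong) (use distinct in \<open>auto simp: T1_def\<close>)
  moreover have "emb2 s0 s1 W ** local_op {s1, s2, s3} T1 = local_op {s0, s1, s2, s3} T2"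
    unfolding emb2_eq_local_op local_op_mult supports sum_agree_off_single
    by (rule local_op_cong) (use distinct in \<open>auto simp: T1_def T2_def\<close>)
  moreover have "emb2 s1 s2 Q ** local_op {s0, s1, s2, s3} T2 = local_op {s0, s1, s2, s3} T2"
    unfolding emb2_eq_local_op local_op_mult supports
    by (rule local_op_cong) (use distinct assms(2) in \<open>auto simp: sum_agree_off_pair T2_def absorbs_def\<close>)
  ultimately show ?thesis
    by simp
qed

lemma mat_prod_list_Nil [simp]: "mat_prod_list [] = mat 1"
  and mat_prod_list_Cons [simp]: "mat_prod_list (M # Ms) = M ** mat_prod_list Ms"
  by (simp_all add: mat_prod_list_def)

lemma commute_mat_prod_list:
  "(\<And>N. N \<in> set Ms \<Longrightarrow> A ** N = N ** A) \<Longrightarrow> A ** mat_prod_list Ms = mat_prod_list Ms ** A"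
proof (induction Ms)
  case (Cons M Ms)
  have "A ** (M ** mat_prod_list Ms) = M ** (A ** mat_prod_list Ms)"
    using Cons.prems by (simp add: matrix_mul_assoc)
  also have "\<dots> = M ** mat_prod_list Ms ** A"
    using Cons by (simp add: matrix_mul_assoc)
  finally show ?case by simp
qed simp

lemma mat_prod_list_commute:
  "(\<And>A B. A \<in> set As \<Longrightarrow> B \<in> set Bs \<Longrightarrow> A ** B = B ** A) \<Longrightarrow>
    mat_prod_list As ** mat_prod_list Bs = mat_prod_list Bs ** mat_prod_list As"
proof (induction As)
  case (Cons A As)
  have IH: "mat_prod_list As ** mat_prod_list Bs = mat_prod_list Bs ** mat_prod_list As"
    using Cons by auto
  have "A ** mat_prod_list As ** mat_prod_list Bs = A ** mat_prod_list Bs ** mat_prod_list As"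
    by (simp add: matrix_mul_assoc[symmetric] IH)
  also have "\<dots> = mat_prod_list Bs ** A ** mat_prod_list As"
    using commute_mat_prod_list[of Bs A] Cons.prems by simp
  finally show ?case by (simp add: matrix_mul_assoc)
qed simp

lemma mat_prod_list_mult_map:
  "distinct xs \<Longrightarrow> (\<And>i j. i \<in> set xs \<Longrightarrow> j \<in> set xs \<Longrightarrow> i \<noteq> j \<Longrightarrow> g i ** f j = f j ** g i) \<Longrightarrow>
    mat_prod_list (map f xs) ** mat_prod_list (map g xs) = mat_prod_list (map (\<lambda>i. f i ** g i) xs)"
proof (induction xs)
  case (Cons x xs)
  have commute: "g x ** mat_prod_list (map f xs) = mat_prod_list (map f xs) ** g x"
    by (rule commute_mat_prod_list) (use Cons.prems in auto)
  have "f x ** mat_prod_list (map f xs) ** (g x ** mat_prod_list (map g xs)) =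
      f x ** (g x ** mat_prod_list (map f xs)) ** mat_prod_list (map g xs)"
    by (simp add: commute matrix_mul_assoc)
  also have "\<dots> = (f x ** g x) ** (mat_prod_list (map f xs) ** mat_prod_list (map g xs))"
    by (simp add: matrix_mul_assoc)
  finally show ?case using Cons by simp
qed simp

lemma mat_prod_list_one: "(\<And>i. i \<in> set xs \<Longrightarrow> f i = mat 1) \<Longrightarrow> mat_prod_list (map f xs) = mat 1"
  by (induction xs) auto

lemma mat_prod_list_fixes: "(\<And>i. i \<in> set xs \<Longrightarrow> f i ** X = X) \<Longrightarrow> mat_prod_list (map f xs) ** X = X"
  by (induction xs) (simp_all add: matrix_mul_assoc[symmetric])

lemma mat_prod_list_extract:
  "distinct xs \<Longrightarrow> a \<in> set xs \<Longrightarrow> (\<And>i j. i \<in> set xs \<Longrightarrow> j \<in> set xs \<Longrightarrow> f i ** f j = f j ** f i) \<Longrightarrow>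
    mat_prod_list (map f xs) = f a ** mat_prod_list (map f (remove1 a xs))"
proof (induction xs)
  case (Cons x xs)
  show ?case
  proof (cases "x = a")
    case False
    with Cons have "mat_prod_list (map f (x # xs)) = f x ** (f a ** mat_prod_list (map f (remove1 a xs)))"
      by simp
    also have "\<dots> = f a ** (f x ** mat_prod_list (map f (remove1 a xs)))"
      using Cons.prems by (simp add: matrix_mul_assoc)
    finally show ?thesis using False by simp
  qed simp
qed simp

lemma mat_prod_list_absorbs:
  assumes dist: "distinct xs" and AB: "A \<in> set xs" "B \<in> set xs" "A \<noteq> B" and C: "C \<in> set xs"
    and w_comm: "\<And>i j. i \<in> set xs \<Longrightarrow> j \<in> set xs \<Longrightarrow> w i ** w j = w j ** w i"
    and p_comm: "\<And>i j. i \<in> set xs \<Longrightarrow> j \<in> set xs \<Longrightarrow> p i ** p j = p j ** p i"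
    and w_p_comm: "\<And>i. i \<in> set xs \<Longrightarrow> i \<noteq> A \<Longrightarrow> i \<noteq> B \<Longrightarrow> w i ** p C = p C ** w i"
    and absorb: "q ** (w A ** (w B ** p C)) = w A ** (w B ** p C)"
  shows "q ** (mat_prod_list (map w xs) ** mat_prod_list (map p xs)) =
    mat_prod_list (map w xs) ** mat_prod_list (map p xs)"
proof -
  let ?ys = "remove1 B (remove1 A xs)"
  let ?R = "mat_prod_list (map w ?ys)" and ?S = "mat_prod_list (map p (remove1 C xs))"
  have dist': "distinct (remove1 A xs)" and B': "B \<in> set (remove1 A xs)"
    using AB dist by simp_all
  have "mat_prod_list (map w xs) = w A ** mat_prod_list (map w (remove1 A xs))"
    by (rule mat_prod_list_extract[OF dist AB(1) w_comm])
  also have "mat_prod_list (map w (remove1 A xs)) = w B ** ?R"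
    by (rule mat_prod_list_extract[OF dist' B']) (use w_comm in \<open>auto dest: subsetD[OF set_remove1_subset]\<close>)
  finally have w_split: "mat_prod_list (map w xs) = w A ** (w B ** ?R)" .
  have p_split: "mat_prod_list (map p xs) = p C ** ?S"
    by (rule mat_prod_list_extract[OF dist C p_comm])
  have "set ?ys = set xs - {A, B}"
    using dist dist' by auto
  then have R_comm: "?R ** p C = p C ** ?R"
    by (intro commute_mat_prod_list[symmetric]) (use w_p_comm in auto)
  have "mat_prod_list (map w xs) ** mat_prod_list (map p xs) = w A ** (w B ** ((?R ** p C) ** ?S))"
    by (simp only: w_split p_split matrix_mul_assoc)
  also have "\<dots> = (w A ** (w B ** p C)) ** (?R ** ?S)"
    by (simp only: R_comm matrix_mul_assoc)
  finally show ?thesis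
    by (simp only: matrix_mul_assoc[of q "w A ** (w B ** p C)"] absorb)
qed

section \<open>The periodic chain of 2L sites\<close>

lemma site_eq_mod: "(site a :: 'L::finite bit0) = site b \<longleftrightarrow> a mod (2 * CARD('L)) = b mod (2 * CARD('L))"
proof -
  have "Rep_bit0 (site m :: 'L bit0) = int (m mod (2 * CARD('L)))" for m
    unfolding site_def by (simp add: bit0.of_nat_eq Abs_bit0_inverse zmod_int)
  then show ?thesis
    by (metis Rep_bit0_inject of_nat_eq_iff)
qed

lemma site_eq_iff:
  assumes "a < 4 * CARD('L::finite)" "b < 4 * CARD('L)"
  shows "(site a :: 'L bit0) = site b \<longleftrightarrow> a = b \<or> a = b + 2 * CARD('L) \<or> b = a + 2 * CARD('L)"
proof -
  have "m mod (2 * CARD('L)) = (if m < 2 * CARD('L) then m else m - 2 * CARD('L))" if "m < 4 * CARD('L)" for m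
    using that by (simp add: le_mod_geq)
  then show ?thesis
    using assms by (auto simp: site_eq_mod)
qed

lemma site_Suc: "(site (Suc m) :: 'L::finite bit0) = site m + 1"
  by (simp add: site_def)

lemma site_Suc_eq_iff: "(site (Suc a) :: 'L::finite bit0) = site (Suc b) \<longleftrightarrow> (site a :: 'L bit0) = site b"
  by (simp add: site_Suc)

lemma site_add_neq:
  assumes "0 < d" "d < 2 * CARD('L::finite)"
  shows "(site m :: 'L bit0) \<noteq> site (m + d)"
proof
  assume "(site m :: 'L bit0) = site (m + d)"
  then have "(m + d) mod (2 * CARD('L)) = m mod (2 * CARD('L))"
    by (simp add: site_eq_mod)
  then have "2 * CARD('L) dvd d"
    using mod_eq_dvd_iff_nat[of m "m + d"] by simp
  with assms show False
    by (simp add: nat_dvd_not_less)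
qed

lemma site_Suc_neq: "(site m :: 'L::finite bit0) \<noteq> site (Suc m)"
proof -
  have odd_pos: "Suc x = 2 * N \<Longrightarrow> 0 < x" for x N :: nat
    by presburger
  show ?thesis
    by (simp add: site_eq_mod mod_Suc odd_pos)
qed

lemma site_parity:
  assumes "(site a :: 'L::finite bit0) = site b"
  shows "even a \<longleftrightarrow> even b"
proof -
  have "a mod (2 * CARD('L)) mod 2 = b mod (2 * CARD('L)) mod 2"
    using assms by (simp add: site_eq_mod)
  then show ?thesis
    by (simp add: mod_mod_cancel even_iff_mod_2_eq_zero)
qed

lemma distinct_sites4:
  assumes "2 \<le> CARD('L::finite)"
  shows "distinct [site m, site (m + 1), site (m + 2), site (m + 3) :: 'L bit0]"
proof -
  have "(site (m + a) :: 'L bit0) \<noteq> site (m + b)" if "a < b" "b \<le> 3" for a b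
    using site_add_neq[of "b - a" "m + a", where 'L = 'L] assms that by auto
  from this[of 0 1] this[of 0 2] this[of 0 3] this[of 1 2] this[of 1 3] this[of 2 3] show ?thesis
    by (auto simp: add.assoc)
qed

lemma site_layer_inj:
  assumes "2 \<le> CARD('L::finite)" "s \<le> 1" "i \<in> {1..CARD('L)}" "i' \<in> {1..CARD('L)}"
    and "(site (2 * i - s) :: 'L bit0) = site (2 * i' - s)"
  shows "i = i'"
  using assms by (auto simp: site_eq_iff)

definition bond :: "nat \<Rightarrow> complex ^ ('d::finite \<times> 'd) ^ ('d \<times> 'd) \<Rightarrow> complex ^ ('d ^ 'L::finite bit0) ^ ('d ^ 'L bit0)" where
  "bond m X = emb2 (site m) (site (Suc m)) X"

definition layer :: "nat \<Rightarrow> complex ^ ('d::finite \<times> 'd) ^ ('d \<times> 'd) \<Rightarrow> complex ^ ('d ^ 'L::finite bit0) ^ ('d ^ 'L bit0)" where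
  "layer r X = mat_prod_list (map (\<lambda>j. bond (2 * j - r) X) [1..<CARD('L) + 1])"

lemma prod_half_int_eq_layer: "prod_half_int X = layer 1 X"
  and prod_int_half_eq_layer: "prod_int_half X = layer 0 X"
  unfolding prod_half_int_def prod_int_half_def layer_def bond_def
  by (auto intro!: arg_cong[where f = mat_prod_list])

lemma bond_mult: "bond m X ** bond m Y = bond m (X ** Y)"
  by (simp add: bond_def emb2_mult site_Suc_neq)

lemma bond_one: "bond m (mat 1) = mat 1"
  by (simp add: bond_def emb2_one site_Suc_neq)

lemma bond_cong: "(site m :: 'L::finite bit0) = site m' \<Longrightarrow> (bond m X :: complex ^ ('d::finite ^ 'L bit0) ^ _) = bond m' X"
  by (simp add: bond_def site_Suc)

lemma bond_commute_apart:
  assumes "(site a :: 'L::finite bit0) \<noteq> site b" "(site a :: 'L bit0) \<noteq> site (Suc b)" "(site (Suc a) :: 'L bit0) \<noteq> site b"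
  shows "(bond a X :: complex ^ ('d::finite ^ 'L bit0) ^ _) ** bond b Y = bond b Y ** bond a X"
proof -
  have "{site a, site (Suc a)} \<inter> {site b, site (Suc b)} = ({} :: 'L bit0 set)"
    using assms site_Suc_eq_iff[of a b] by auto
  then show ?thesis
    unfolding bond_def by (rule emb2_commute_disjoint)
qed

lemma bond_commute_same_layer:
  assumes L: "2 \<le> CARD('L::finite)" and "s \<le> 1" "i \<in> {1..CARD('L)}" "j \<in> {1..CARD('L)}" "i \<noteq> j"
  shows "(bond (2 * i - s) X :: complex ^ ('d::finite ^ 'L bit0) ^ _) ** bond (2 * j - s) Y =
    bond (2 * j - s) Y ** bond (2 * i - s) X"
proof (rule bond_commute_apart)
  show "(site (2 * i - s) :: 'L bit0) \<noteq> site (2 * j - s)"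
    using site_layer_inj[OF assms(1,2,3,4)] assms(5) by blast
  show "(site (2 * i - s) :: 'L bit0) \<noteq> site (Suc (2 * j - s))" "(site (Suc (2 * i - s)) :: 'L bit0) \<noteq> site (2 * j - s)"
    using assms(2-4) by (auto dest!: site_parity)
qed

lemma layer_mult:
  assumes "2 \<le> CARD('L::finite)" "r \<le> 1"
  shows "(layer r X :: complex ^ ('d::finite ^ 'L bit0) ^ _) ** layer r Y = layer r (X ** Y)"
  unfolding layer_def
  by (subst mat_prod_list_mult_map) (auto intro!: bond_commute_same_layer assms simp: bond_mult)

lemma layer_one: "(layer r (mat 1) :: complex ^ ('d::finite ^ 'L::finite bit0) ^ _) = mat 1"
  unfolding layer_def by (rule mat_prod_list_one) (simp add: bond_one)

lemma layer_commute:
  assumes L: "2 \<le> CARD('L::finite)" and "overlap_commute P Q" "overlap_commute Q P"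
  shows "(layer 0 P :: complex ^ ('d::finite ^ 'L bit0) ^ _) ** layer 1 Q = layer 1 Q ** layer 0 P"
  unfolding layer_def
proof (rule mat_prod_list_commute)
  fix A B :: "complex ^ ('d ^ 'L bit0) ^ ('d ^ 'L bit0)"
  assume "A \<in> set (map (\<lambda>j. bond (2 * j - 0) P) [1..<CARD('L) + 1])"
    and "B \<in> set (map (\<lambda>j. bond (2 * j - 1) Q) [1..<CARD('L) + 1])"
  then obtain i j where i: "i \<in> {1..CARD('L)}" and j: "j \<in> {1..CARD('L)}"
    and AB: "A = bond (2 * i) P" "B = bond (2 * j - 1) Q"
    by (force simp del: upt_Suc)
  consider "j = i" | "(site (2 * j - 1) :: 'L bit0) = site (Suc (2 * i))"
    | "j \<noteq> i" "(site (2 * j - 1) :: 'L bit0) \<noteq> site (Suc (2 * i))"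
    by blast
  then show "A ** B = B ** A"
  proof cases
    case 1
    have "distinct [site (2 * i - 1), site (2 * i), site (Suc (2 * i)) :: 'L bit0]"
      using distinct_sites4[OF L, of "2 * i - 1"] i by simp
    from emb2_commute_overlap[OF this assms(3)] show ?thesis
      using 1 i unfolding AB bond_def by simp
  next
    case 2
    have "distinct [site (2 * i), site (Suc (2 * i)), site (Suc (Suc (2 * i))) :: 'L bit0]"
      using distinct_sites4[OF L, of "2 * i"] by simp
    from emb2_commute_overlap[OF this assms(2)] show ?thesis
      unfolding AB bond_cong[OF 2] by (simp add: bond_def)
  next
    case 3
    have "(site (2 * i) :: 'L bit0) \<noteq> site (2 * j - 1)" "(site (Suc (2 * i)) :: 'L bit0) \<noteq> site (2 * j - 1)"
      using j 3(2) by (auto dest!: site_parity)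
    moreover have "(site (2 * i) :: 'L bit0) \<noteq> site (Suc (2 * j - 1))"
      using site_layer_inj[OF L _ i j, of 0] j 3(1) by auto
    ultimately show ?thesis
      unfolding AB by (intro bond_commute_apart)
  qed
qed

lemma layer_neighbours:
  assumes L: "2 \<le> CARD('L::finite)" and r: "r \<le> 1" and j: "j \<in> {1..CARD('L)}"
  obtains A B where "A \<in> {1..CARD('L)}" "B \<in> {1..CARD('L)}" "A \<noteq> B"
    "(site (2 * A - (1 - r)) :: 'L bit0) = site (2 * j - r - 1)"
    "(site (2 * B - (1 - r)) :: 'L bit0) = site (2 * j - r + 1)"
proof
  let ?A = "if r = 1 then if j = 1 then CARD('L) else j - 1 else j"
  let ?B = "if r = 1 then j else if j = CARD('L) then 1 else j + 1"
  show "?A \<in> {1..CARD('L)}" "?B \<in> {1..CARD('L)}" "?A \<noteq> ?B"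
    using j r L by auto
  show "(site (2 * ?A - (1 - r)) :: 'L bit0) = site (2 * j - r - 1)"
    "(site (2 * ?B - (1 - r)) :: 'L bit0) = site (2 * j - r + 1)"
    using j r L by (auto simp: site_eq_iff)
qed

lemma bond_commute_across_layers:
  assumes L: "2 \<le> CARD('L::finite)" and r: "r \<le> 1" and i: "i \<in> {1..CARD('L)}" and j: "j \<in> {1..CARD('L)}"
    and "(site (2 * i - (1 - r)) :: 'L bit0) \<noteq> site (2 * j - r - 1)"
    and "(site (2 * i - (1 - r)) :: 'L bit0) \<noteq> site (2 * j - r + 1)"
  shows "(bond (2 * i - (1 - r)) X :: complex ^ ('d::finite ^ 'L bit0) ^ _) ** bond (2 * j - r) Y =
    bond (2 * j - r) Y ** bond (2 * i - (1 - r)) X"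
proof (rule bond_commute_apart)
  have m: "Suc (2 * j - r - 1) = 2 * j - r"
    using j r by auto
  show "(site (2 * i - (1 - r)) :: 'L bit0) \<noteq> site (2 * j - r)"
    using i j r by (auto dest!: site_parity)
  show "(site (2 * i - (1 - r)) :: 'L bit0) \<noteq> site (Suc (2 * j - r))"
    using assms(6) by simp
  show "(site (Suc (2 * i - (1 - r))) :: 'L bit0) \<noteq> site (2 * j - r)"
  proof
    assume "(site (Suc (2 * i - (1 - r))) :: 'L bit0) = site (2 * j - r)"
    then have "(site (Suc (2 * i - (1 - r))) :: 'L bit0) = site (Suc (2 * j - r - 1))"
      by (simp only: m)
    with assms(5) show False
      by (simp only: site_Suc_eq_iff)
  qed
qed

lemma layer_absorbs:
  assumes L: "2 \<le> CARD('L::finite)" and r: "r \<le> 1" and "absorbs Q W P"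
  shows "(layer r Q :: complex ^ ('d::finite ^ 'L bit0) ^ _) ** (layer (1 - r) W ** layer r P) =
    layer (1 - r) W ** layer r P"
  unfolding layer_def
proof (rule mat_prod_list_fixes)
  fix j assume "j \<in> set [1..<CARD('L) + 1]"
  then have j: "j \<in> {1..CARD('L)}" by auto
  obtain A B where AB: "A \<in> {1..CARD('L)}" "B \<in> {1..CARD('L)}" "A \<noteq> B"
    and A_site: "(site (2 * A - (1 - r)) :: 'L bit0) = site (2 * j - r - 1)"
    and B_site: "(site (2 * B - (1 - r)) :: 'L bit0) = site (2 * j - r + 1)"
    by (rule layer_neighbours[OF L r j])
  let ?w = "\<lambda>i. bond (2 * i - (1 - r)) W :: complex ^ ('d ^ 'L bit0) ^ ('d ^ 'L bit0)"
  let ?p = "\<lambda>i. bond (2 * i - r) P :: complex ^ ('d ^ 'L bit0) ^ ('d ^ 'L bit0)"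
  define m where "m = 2 * j - r"
  have m: "Suc (m - 1) = m"
    using j r by (auto simp: m_def)
  have "distinct [site (m - 1), site m, site (m + 1), site (m + 2) :: 'L bit0]"
    using distinct_sites4[OF L, of "m - 1"] m by simp
  from emb2_absorbs[OF this assms(3)]
  have absorb: "bond (2 * j - r) Q ** (?w A ** (?w B ** ?p j)) = ?w A ** (?w B ** ?p j)"
    unfolding bond_cong[OF A_site] bond_cong[OF B_site] m_def[symmetric]
    using m by (simp add: bond_def)
  have "?w i ** ?p j = ?p j ** ?w i" if i: "i \<in> {1..CARD('L)}" and "i \<noteq> A" "i \<noteq> B" for i
  proof (rule bond_commute_across_layers[OF L r i j])
    show "(site (2 * i - (1 - r)) :: 'L bit0) \<noteq> site (2 * j - r - 1)"
      using site_layer_inj[OF L _ i AB(1), of "1 - r"] that(2) unfolding A_site by auto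
    show "(site (2 * i - (1 - r)) :: 'L bit0) \<noteq> site (2 * j - r + 1)"
      using site_layer_inj[OF L _ i AB(2), of "1 - r"] that(3) unfolding B_site by auto
  qed
  then show "bond (2 * j - r) Q ** (mat_prod_list (map ?w [1..<CARD('L) + 1]) ** mat_prod_list (map ?p [1..<CARD('L) + 1])) =
    mat_prod_list (map ?w [1..<CARD('L) + 1]) ** mat_prod_list (map ?p [1..<CARD('L) + 1])"
  proof (intro mat_prod_list_absorbs[where A = A and B = B and C = j and w = ?w and p = ?p])
    show "?w i ** ?w k = ?w k ** ?w i" if "i \<in> set [1..<CARD('L) + 1]" "k \<in> set [1..<CARD('L) + 1]" for i k
      using that bond_commute_same_layer[OF L, of "1 - r" i k W W] by (cases "i = k") auto
    show "?p i ** ?p k = ?p k ** ?p i" if "i \<in> set [1..<CARD('L) + 1]" "k \<in> set [1..<CARD('L) + 1]" for i k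
      using that r bond_commute_same_layer[OF L, of r i k P P] by (cases "i = k") auto
  qed (use AB j absorb in \<open>auto simp del: upt_Suc\<close>)
qed

lemma layers_intertwine:
  fixes P Q W U :: "complex ^ ('d::finite \<times> 'd) ^ ('d \<times> 'd)"
  assumes L: "2 \<le> CARD('L::finite)"
    and "overlap_commute P Q" "overlap_commute Q P" "absorbs Q W P" "P ** W = W" "U ** Q = W"
  defines "Phat \<equiv> (layer 0 P :: complex ^ ('d ^ 'L bit0) ^ ('d ^ 'L bit0)) ** layer 1 Q"
    and "Phalf \<equiv> (layer 0 Q :: complex ^ ('d ^ 'L bit0) ^ ('d ^ 'L bit0)) ** layer 1 P"
  shows "Phalf ** layer 1 U ** Phat = layer 1 U ** Phat"
    and "Phat ** layer 0 U ** Phalf = layer 0 U ** Phalf"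
proof -
  note mult0 = layer_mult[OF L zero_le_one] and mult1 = layer_mult[OF L order.refl]
  have Uo_Phat: "layer 1 U ** Phat = layer 1 W ** layer 0 P"
    unfolding Phat_def layer_commute[OF assms(1-3)] matrix_mul_assoc mult1 assms(6) ..
  have Ue_Phalf: "layer 0 U ** Phalf = layer 0 W ** layer 1 P"
    unfolding Phalf_def matrix_mul_assoc mult0 assms(6) ..
  have "Phalf ** layer 1 U ** Phat = layer 0 Q ** ((layer 1 P ** layer 1 W) ** layer 0 P)"
    by (simp only: Phalf_def matrix_mul_assoc[symmetric] Uo_Phat)
  also have "\<dots> = layer 1 W ** layer 0 P"
    using layer_absorbs[OF L zero_le_one assms(4)] by (simp only: mult1 assms(5) diff_zero)
  finally show "Phalf ** layer 1 U ** Phat = layer 1 U ** Phat"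
    using Uo_Phat by simp
  have "Phat ** layer 0 U ** Phalf = layer 0 P ** (layer 1 Q ** (layer 0 W ** layer 1 P))"
    by (simp only: Phat_def matrix_mul_assoc[symmetric] Ue_Phalf)
  also have "\<dots> = (layer 0 P ** layer 0 W) ** layer 1 P"
    using layer_absorbs[OF L order.refl assms(4)] by (simp add: matrix_mul_assoc)
  finally show "Phat ** layer 0 U ** Phalf = layer 0 U ** Phalf"
    using Ue_Phalf by (simp add: mult0 assms(5))
qed

section \<open>Matrices\<close>

lemma adj_mult: "adj (A ** B) = adj B ** adj (A :: complex ^ 'n::finite ^ 'm::finite)"
  by (simp add: adj_def matrix_matrix_mult_def vec_eq_iff mult.commute)

lemma adj_adj [simp]: "adj (adj A) = A"
  by (simp add: adj_def vec_eq_iff)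

lemma projection_factor_fixes:
  assumes "W ** adj W = P" "W = P ** U" "unitary_mat (U :: complex ^ 'n::finite ^ 'n)"
  shows "P ** W = W"
proof -
  have "P = P ** (U ** adj U) ** adj P"
    using assms(1,2) by (simp add: adj_mult matrix_mul_assoc)
  then have P_eq: "P = P ** adj P"
    using assms(3) by (simp add: unitary_mat_def)
  then have "adj P = P"
    by (metis adj_mult adj_adj)
  then have "P ** P = P"
    using P_eq by simp
  then show ?thesis
    using assms(2) by (simp add: matrix_mul_assoc)
qed

lemma inj_matrix_vector_mult: "V ** U = mat 1 \<Longrightarrow> inj (\<lambda>x. U *v x)"
  by (rule inj_on_inverseI[where g = "\<lambda>x. V *v x"]) (simp add: matrix_vector_mul_assoc)

lemma range_absorbed_subset:
  assumes "R ** U ** P = U ** P"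
  shows "(\<lambda>x. U *v x) ` range (\<lambda>x. P *v x) \<subseteq> range (\<lambda>x. R *v x)"
proof clarify
  fix x
  have "U *v (P *v x) = (R ** U ** P) *v x"
    by (simp only: matrix_vector_mul_assoc assms)
  also have "\<dots> = R *v ((U ** P) *v x)"
    by (simp only: matrix_vector_mul_assoc matrix_mul_assoc)
  finally have "U *v (P *v x) = R *v ((U ** P) *v x)" .
  then show "U *v (P *v x) \<in> range (\<lambda>x. R *v x)" by blast
qed

lemma range_image_eq_of_injective:
  fixes U U' P R :: "complex ^ 'n::finite ^ 'n"
  assumes UPR: "(\<lambda>x. U *v x) ` range (\<lambda>x. P *v x) \<subseteq> range (\<lambda>x. R *v x)"
    and U'RP: "(\<lambda>x. U' *v x) ` range (\<lambda>x. R *v x) \<subseteq> range (\<lambda>x. P *v x)"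
    and "V ** U = mat 1" "V' ** U' = mat 1"
  shows "(\<lambda>x. U *v x) ` range (\<lambda>x. P *v x) = range (\<lambda>x. R *v x)"
proof -
  let ?P = "range (\<lambda>x. P *v x)" and ?R = "range (\<lambda>x. R *v x)"
  have subspaces: "subspace ?P" "subspace ?R" "subspace ((\<lambda>x. U *v x) ` ?P)"
    by (simp_all add: linear_subspace_image)
  have "inj (\<lambda>x. U *v x)" "inj (\<lambda>x. U' *v x)"
    using assms(3,4) by (simp_all add: inj_matrix_vector_mult)
  then have "dim ((\<lambda>x. U *v x) ` ?P) = dim ?P" "dim ((\<lambda>x. U' *v x) ` ?R) = dim ?R"
    by (auto intro!: dim_image_eq intro: inj_on_subset)
  then have "dim ?R \<le> dim ((\<lambda>x. U *v x) ` ?P)"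
    using dim_subset[OF U'RP] by simp
  then show ?thesis
    by (rule subspace_dim_equal[OF subspaces(3,2) UPR])
qed

lemma intertwined_ranges:
  fixes Phat Phalf Uo Ue :: "complex ^ 'n::finite ^ 'n"
  assumes Phalf_Uo: "Phalf ** Uo ** Phat = Uo ** Phat" and Phat_Ue: "Phat ** Ue ** Phalf = Ue ** Phalf"
    and inverses: "Vo ** Uo = mat 1" "Ve ** Ue = mat 1"
  shows "(\<lambda>x. Uo *v x) ` range (\<lambda>x. Phat *v x) = range (\<lambda>x. Phalf *v x)"
    and "(\<lambda>x. Ue *v x) ` range (\<lambda>x. Phalf *v x) = range (\<lambda>x. Phat *v x)"
    and "(\<lambda>x. (Ue ** Uo) *v x) ` range (\<lambda>x. Phat *v x) = range (\<lambda>x. Phat *v x)"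
proof -
  note Uo_sub = range_absorbed_subset[OF Phalf_Uo] and Ue_sub = range_absorbed_subset[OF Phat_Ue]
  show Uo_image: "(\<lambda>x. Uo *v x) ` range (\<lambda>x. Phat *v x) = range (\<lambda>x. Phalf *v x)"
    by (rule range_image_eq_of_injective[OF Uo_sub Ue_sub inverses])
  show Ue_image: "(\<lambda>x. Ue *v x) ` range (\<lambda>x. Phalf *v x) = range (\<lambda>x. Phat *v x)"
    by (rule range_image_eq_of_injective[OF Ue_sub Uo_sub inverses(2,1)])
  have "(\<lambda>x. (Ue ** Uo) *v x) ` range (\<lambda>x. Phat *v x) =
      (\<lambda>x. Ue *v x) ` (\<lambda>x. Uo *v x) ` range (\<lambda>x. Phat *v x)"
    by (simp only: image_image matrix_vector_mul_assoc[of Ue Uo])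
  then show "(\<lambda>x. (Ue ** Uo) *v x) ` range (\<lambda>x. Phat *v x) = range (\<lambda>x. Phat *v x)"
    by (simp only: Uo_image Ue_image)
qed

section \<open>The representation\<close>

locale corep_star_rep = weak_bialg_corep mul one cop cou v
  for mul :: "complex ^ 'b::finite \<Rightarrow> complex ^ 'b \<Rightarrow> complex ^ 'b"
    and one :: "complex ^ 'b"
    and cop :: "complex ^ 'b \<Rightarrow> complex ^ ('b \<times> 'b)"
    and cou :: "complex ^ 'b \<Rightarrow> complex"
    and v :: "'d::finite \<Rightarrow> 'd \<Rightarrow> complex ^ 'b" +
  fixes S st :: "complex ^ 'b \<Rightarrow> complex ^ 'b"
    and \<rho> :: "complex ^ 'b \<Rightarrow> complex ^ 'd ^ 'd"
  assumes c_star_weak_hopf: "c_star_weak_hopf mul one cop cou S st"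
    and star_rep: "star_rep mul one st \<rho>"
    and antipode_corep: "\<forall>i j. S (v i j) = st (v j i)"
begin

lemma antipode_clin: "clin_map S"
  and antipode_target: "(\<Sum>i\<in>UNIV. \<Sum>j\<in>UNIV. cop x $ (i, j) *s mul (ebas i) (S (ebas j))) = \<epsilon>\<^sub>t x"
  using c_star_weak_hopf unfolding c_star_weak_hopf_def weak_hopf_def by auto

lemma rho_add: "\<rho> (x + y) = \<rho> x + \<rho> y"
  and rho_smult_nth: "\<rho> (c *s x) $ a $ b = c * \<rho> x $ a $ b"
  and rho_mul: "\<rho> (mul x y) = \<rho> x ** \<rho> y"
  and rho_star: "\<rho> (st x) = adj (\<rho> x)"
  using star_rep unfolding star_rep_def by auto

lemma clin_fun_rho_nth: "clin_fun (\<lambda>x. \<rho> x $ a $ b)"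
  by (simp add: clin_fun_def rho_add rho_smult_nth)

lemma rho_zero: "\<rho> 0 = 0"
  using rho_add[of 0 0] by simp

lemma rho_sum: "\<rho> (\<Sum>k\<in>A. f k) = (\<Sum>k\<in>A. \<rho> (f k))"
  by (induction A rule: infinite_finite_induct) (simp_all add: rho_zero rho_add)

lemma sum_rho_nth_mult: "(\<Sum>c\<in>UNIV. \<rho> x $ a $ c * \<rho> y $ c $ b) = \<rho> (mul x y) $ a $ b"
  by (simp add: rho_mul matrix_matrix_mult_def)

lemma eval_tens_rho: "eval_tens (tens u w) (\<lambda>x. \<rho> x $ a $ b) (\<lambda>x. \<rho> x $ c $ d) = \<rho> u $ a $ b * \<rho> w $ c $ d"
  by (rule eval_tens_tens[OF clin_fun_rho_nth clin_fun_rho_nth])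

lemma corep_mul_antipode: "(\<Sum>k\<in>UNIV. mul (v i k) (S (v k j))) = \<epsilon>\<^sub>t (v i j)"
proof -
  have expand_right: "mul (ebas a) (S (v k j)) = (\<Sum>b\<in>UNIV. v k j $ b *s mul (ebas a) (S (ebas b)))" for a k
    by (rule clin_map_expand[OF clin_map_comp[OF mul_clin_left antipode_clin]])
  have expand_left: "mul (v i k) (S (v k j)) = (\<Sum>a\<in>UNIV. v i k $ a *s mul (ebas a) (S (v k j)))" for k
    by (rule clin_map_expand[OF mul_clin_right])
  have "\<epsilon>\<^sub>t (v i j) = (\<Sum>a\<in>UNIV. \<Sum>b\<in>UNIV. \<Sum>k\<in>UNIV. (v i k $ a * v k j $ b) *s mul (ebas a) (S (ebas b)))"
    by (simp add: antipode_target[symmetric] cop_corep_nth vec.scale_sum_left)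
  also have "\<dots> = (\<Sum>k\<in>UNIV. \<Sum>a\<in>UNIV. \<Sum>b\<in>UNIV. (v i k $ a * v k j $ b) *s mul (ebas a) (S (ebas b)))"
    by (rule sum_rotate3)
  also have "\<dots> = (\<Sum>k\<in>UNIV. mul (v i k) (S (v k j)))"
    by (simp add: expand_left expand_right vec.scale_sum_right)
  finally show ?thesis by (rule sym)
qed

lemma rho_eps_t_nth: "\<rho> (\<epsilon>\<^sub>t x) $ a $ b =
    (\<Sum>p\<in>UNIV. \<Sum>q\<in>UNIV. cop one $ (p, q) * cou (mul (ebas p) x) * \<rho> (ebas q) $ a $ b)"
  by (subst clin_fun_expand[OF clin_fun_rho_nth]) (simp add: eps_t_nth sum_distrib_right, rule sum.swap)

lemma rho_eps_s_nth: "\<rho> (\<epsilon>\<^sub>s x) $ a $ b =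
    (\<Sum>p\<in>UNIV. \<Sum>q\<in>UNIV. cop one $ (p, q) * \<rho> (ebas p) $ a $ b * cou (mul x (ebas q)))"
  by (subst clin_fun_expand[OF clin_fun_rho_nth]) (simp add: eps_s_nth sum_distrib_right sum_distrib_left mult_ac)

lemma rho_corep_mult_adj: "(\<Sum>k\<in>UNIV. \<rho> (v i k) ** adj (\<rho> (v j k))) = \<rho> (\<epsilon>\<^sub>t (v i j))"
  by (simp add: corep_mul_antipode[symmetric] antipode_corep rho_sum rho_mul rho_star)

definition Wmat :: "complex ^ ('d \<times> 'd) ^ ('d \<times> 'd)" where
  "Wmat = (\<chi> x y. \<rho> (v (fst x) (snd y)) $ snd x $ fst y)"

definition Pmat :: "complex ^ ('d \<times> 'd) ^ ('d \<times> 'd)" where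
  "Pmat = (\<chi> x y. \<rho> (\<epsilon>\<^sub>t (v (fst x) (fst y))) $ snd x $ snd y)"

definition Qmat :: "complex ^ ('d \<times> 'd) ^ ('d \<times> 'd)" where
  "Qmat = (\<chi> x y. \<rho> (\<epsilon>\<^sub>s (v (snd x) (snd y))) $ fst x $ fst y)"

lemma Wmat_nth: "Wmat $ (i, a) $ (b, j) = \<rho> (v i j) $ a $ b"
  and Pmat_nth: "Pmat $ (i, a) $ (j, b) = \<rho> (\<epsilon>\<^sub>t (v i j)) $ a $ b"
  and Qmat_nth: "Qmat $ (a, i) $ (b, j) = \<rho> (\<epsilon>\<^sub>s (v i j)) $ a $ b"
  by (simp_all add: Wmat_def Pmat_def Qmat_def)

lemma Wmat_mult_adj: "Wmat ** adj Wmat = Pmat"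
proof -
  have "(Wmat ** adj Wmat) $ (i, a) $ (j, b) = (\<Sum>c\<in>UNIV. \<Sum>k\<in>UNIV. \<rho> (v i k) $ a $ c * cnj (\<rho> (v j k) $ b $ c))"
    for i a j b
    by (simp add: matrix_matrix_mult_def adj_def Wmat_nth sum_UNIV_pairs)
  also have "\<dots> i a j b = (\<Sum>k\<in>UNIV. (\<rho> (v i k) ** adj (\<rho> (v j k))) $ a $ b)" for i a j b
    by (subst sum.swap) (simp add: matrix_matrix_mult_def adj_def)
  finally show ?thesis
    by (simp add: vec_eq_iff Pmat_nth rho_corep_mult_adj[symmetric])
qed

lemma overlap_commute_Pmat_Qmat: "overlap_commute Pmat Qmat"
  by (simp add: overlap_commute_def Pmat_nth Qmat_nth sum_rho_nth_mult eps_t_eps_s_commute)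

lemma overlap_commute_Qmat_Pmat: "overlap_commute Qmat Pmat"
  unfolding overlap_commute_def Qmat_nth Pmat_nth
proof (intro allI)
  fix x0 x1 x2 y0 y1 y2
  let ?f = "\<lambda>x. \<rho> x $ x0 $ y0" and ?g = "\<lambda>x. \<rho> x $ x2 $ y2"
  have "eval_tens (\<Sum>m\<in>UNIV. tens (\<epsilon>\<^sub>s (v m y1)) (\<epsilon>\<^sub>t (v x1 m))) ?f ?g =
      eval_tens (\<Sum>m\<in>UNIV. tens (\<epsilon>\<^sub>s (v x1 m)) (\<epsilon>\<^sub>t (v m y1))) ?f ?g"
    by (simp only: corep_eps_s_eps_t_flip)
  then show "(\<Sum>a\<in>UNIV. \<rho> (\<epsilon>\<^sub>s (v x1 a)) $ x0 $ y0 * \<rho> (\<epsilon>\<^sub>t (v a y1)) $ x2 $ y2) =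
      (\<Sum>a\<in>UNIV. \<rho> (\<epsilon>\<^sub>t (v x1 a)) $ x2 $ y2 * \<rho> (\<epsilon>\<^sub>s (v a y1)) $ x0 $ y0)"
    by (simp add: eval_tens_sum eval_tens_rho mult.commute)
qed

lemma absorbs_Qmat_Wmat_Pmat: "absorbs Qmat Wmat Pmat"
  unfolding absorbs_def Qmat_nth Wmat_nth Pmat_nth
proof (intro allI)
  fix x0 x1 x2 x3 y0 y1 y2 y3
  let ?f = "\<lambda>x. \<rho> x $ x1 $ y0" and ?g = "\<lambda>x. \<rho> x $ x3 $ y2"
  have "(\<Sum>c\<in>UNIV. \<Sum>e\<in>UNIV. \<rho> (\<epsilon>\<^sub>s (v x2 e)) $ x1 $ c *
      (\<Sum>b\<in>UNIV. \<rho> (v x0 b) $ c $ y0 * (\<Sum>a\<in>UNIV. \<rho> (v e y3) $ x3 $ a * \<rho> (\<epsilon>\<^sub>t (v b y1)) $ a $ y2))) =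
    (\<Sum>c\<in>UNIV. \<Sum>e\<in>UNIV. \<Sum>b\<in>UNIV. \<rho> (\<epsilon>\<^sub>s (v x2 e)) $ x1 $ c * (\<rho> (v x0 b) $ c $ y0 *
      \<rho> (mul (v e y3) (\<epsilon>\<^sub>t (v b y1))) $ x3 $ y2))"
    by (simp add: sum_rho_nth_mult sum_distrib_left)
  also have "\<dots> = (\<Sum>e\<in>UNIV. \<Sum>b\<in>UNIV. \<Sum>c\<in>UNIV. \<rho> (\<epsilon>\<^sub>s (v x2 e)) $ x1 $ c * (\<rho> (v x0 b) $ c $ y0 *
      \<rho> (mul (v e y3) (\<epsilon>\<^sub>t (v b y1))) $ x3 $ y2))"
    by (rule sum_rotate3[symmetric])
  also have "\<dots> = (\<Sum>e\<in>UNIV. \<Sum>b\<in>UNIV. (\<Sum>c\<in>UNIV. \<rho> (\<epsilon>\<^sub>s (v x2 e)) $ x1 $ c * \<rho> (v x0 b) $ c $ y0) *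
      \<rho> (mul (v e y3) (\<epsilon>\<^sub>t (v b y1))) $ x3 $ y2)"
    by (simp add: sum_distrib_right mult.assoc)
  also have "\<dots> = eval_tens (\<Sum>e\<in>UNIV. \<Sum>b\<in>UNIV. tens (mul (\<epsilon>\<^sub>s (v x2 e)) (v x0 b)) (mul (v e y3) (\<epsilon>\<^sub>t (v b y1)))) ?f ?g"
    by (simp only: sum_rho_nth_mult eval_tens_sum eval_tens_rho)
  also have "\<dots> = eval_tens (\<Sum>b\<in>UNIV. tens (v x0 b) (mul (v x2 y3) (\<epsilon>\<^sub>t (v b y1)))) ?f ?g"
    by (simp only: corep_eps_s_eps_t_absorb)
  also have "\<dots> = (\<Sum>b\<in>UNIV. \<rho> (v x0 b) $ x1 $ y0 *
      (\<Sum>a\<in>UNIV. \<rho> (v x2 y3) $ x3 $ a * \<rho> (\<epsilon>\<^sub>t (v b y1)) $ a $ y2))"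
    by (simp add: eval_tens_sum eval_tens_rho sum_rho_nth_mult)
  finally show "(\<Sum>c\<in>UNIV. \<Sum>e\<in>UNIV. \<rho> (\<epsilon>\<^sub>s (v x2 e)) $ x1 $ c *
      (\<Sum>b\<in>UNIV. \<rho> (v x0 b) $ c $ y0 * (\<Sum>a\<in>UNIV. \<rho> (v e y3) $ x3 $ a * \<rho> (\<epsilon>\<^sub>t (v b y1)) $ a $ y2))) =
    (\<Sum>b\<in>UNIV. \<rho> (v x0 b) $ x1 $ y0 *
      (\<Sum>a\<in>UNIV. \<rho> (v x2 y3) $ x3 $ a * \<rho> (\<epsilon>\<^sub>t (v b y1)) $ a $ y2))" .
qed

end

theorem mainTheorem8:
  fixes mul :: "complex ^ 'b::finite \<Rightarrow> complex ^ 'b \<Rightarrow> complex ^ 'b"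
    and one :: "complex ^ 'b"
    and cop :: "complex ^ 'b \<Rightarrow> complex ^ ('b \<times> 'b)"
    and cou :: "complex ^ 'b \<Rightarrow> complex"
    and S st :: "complex ^ 'b \<Rightarrow> complex ^ 'b"
    and \<rho> :: "complex ^ 'b \<Rightarrow> complex ^ 'd::finite ^ 'd"
    and v :: "'d \<Rightarrow> 'd \<Rightarrow> complex ^ 'b"
    and W P Q U :: "complex ^ ('d \<times> 'd) ^ ('d \<times> 'd)"
  assumes A: "c_star_weak_hopf mul one cop cou S st"
    and rho: "star_rep mul one st \<rho>"
    and v: "corep cop cou v"
    and Sv: "\<forall>i j. S (v i j) = st (v j i)"
    and W: "\<forall>i a b j. W $ (i, a) $ (b, j) = \<rho> (v i j) $ a $ b"
    and P: "\<forall>i a j b. P $ (i, a) $ (j, b) =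
              (\<Sum>p\<in>UNIV. \<Sum>q\<in>UNIV. cop one $ (p, q) * cou (mul (ebas p) (v i j)) * \<rho> (ebas q) $ a $ b)"
    and Q: "\<forall>a i b j. Q $ (a, i) $ (b, j) =
              (\<Sum>p\<in>UNIV. \<Sum>q\<in>UNIV. cop one $ (p, q) * \<rho> (ebas p) $ a $ b * cou (mul (v i j) (ebas q)))"
    and U: "unitary_mat U" "W = P ** U" "W = U ** Q"
    and L: "CARD('L::finite) \<ge> 2"
  defines "Phat \<equiv> (prod_int_half P :: complex ^ ('d ^ 'L bit0) ^ ('d ^ 'L bit0)) ** prod_half_int Q"
    and "Phalf \<equiv> (prod_int_half Q :: complex ^ ('d ^ 'L bit0) ^ ('d ^ 'L bit0)) ** prod_half_int P"
    and "Uo \<equiv> (prod_half_int U :: complex ^ ('d ^ 'L bit0) ^ ('d ^ 'L bit0))"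
    and "Ue \<equiv> (prod_int_half U :: complex ^ ('d ^ 'L bit0) ^ ('d ^ 'L bit0))"
  shows "Phalf ** Uo ** Phat = Uo ** Phat \<and>
      Phat ** Ue ** Phalf = Ue ** Phalf \<and>
      (\<lambda>x. Uo *v x) ` range (\<lambda>x. Phat *v x) = range (\<lambda>x. Phalf *v x) \<and>
      (\<lambda>x. Ue *v x) ` range (\<lambda>x. Phalf *v x) = range (\<lambda>x. Phat *v x) \<and>
      (\<lambda>x. (Ue ** Uo) *v x) ` range (\<lambda>x. Phat *v x) \<subseteq> range (\<lambda>x. Phat *v x)"
proof -
  interpret corep_star_rep mul one cop cou v S st \<rho>
    using A rho v Sv by unfold_locales (auto simp: c_star_weak_hopf_def weak_hopf_def)
  have P_Pmat: "P = Pmat" and Q_Qmat: "Q = Qmat" and W_Wmat: "W = Wmat"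
    using P Q W by (simp_all add: vec_eq_iff Pmat_nth Qmat_nth Wmat_nth rho_eps_t_nth rho_eps_s_nth)
  have "P ** W = W"
    using projection_factor_fixes[OF Wmat_mult_adj[folded W_Wmat P_Pmat] U(2,1)] .
  note intertwine = layers_intertwine[OF L overlap_commute_Pmat_Qmat overlap_commute_Qmat_Pmat
      absorbs_Qmat_Wmat_Pmat, folded P_Pmat Q_Qmat W_Wmat, OF this U(3)[symmetric]]
  have layers: "Phat = layer 0 P ** layer 1 Q" "Phalf = layer 0 Q ** layer 1 P" "Uo = layer 1 U" "Ue = layer 0 U"
    by (simp_all only: Phat_def Phalf_def Uo_def Ue_def prod_half_int_eq_layer prod_int_half_eq_layer)
  have Phalf_Uo: "Phalf ** Uo ** Phat = Uo ** Phat" and Phat_Ue: "Phat ** Ue ** Phalf = Ue ** Phalf"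
    unfolding layers by (fact intertwine)+
  have inverses: "layer 1 (adj U) ** Uo = mat 1" "layer 0 (adj U) ** Ue = mat 1"
    using U(1) unfolding layers unitary_mat_def by (simp_all add: layer_mult[OF L] layer_one)
  show ?thesis
    using Phalf_Uo Phat_Ue intertwined_ranges[OF Phalf_Uo Phat_Ue inverses] by simp
qed

end
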